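(* Let $L\in\mathbb N$ satisfy $\operatorname{rank}\mathcal O_L(\Sigma_s)=n$. Then for any input signal $u$ and any $x(0)$, the IOH $v$ and output $y$ of $\Sigma_s$ satisfy $v(t+1)=\Theta v(t)+\Pi u(t)$ and $y(t)=C\Gamma v(t)$ for all $t\ge L$. Further, $v(t)\in\mathscr P:=\mathrm{im}[\Theta^{L(m+r)-1}\Pi,\dots,\Theta\Pi,\Pi]$ for all $t\ge L$, and $\dim\mathscr P=Lm+n$.
   Context: System $\Sigma_s$: $x(t+1)=Ax(t)+Bu(t)$, $y(t)=Cx(t)$, $t\ge0$, $x\in\mathbb R^n,u\in\mathbb R^m,y\in\mathbb R^r$; standing assumptions: $(A,B,C)$ is a minimal realization and $A$ is Schur. $\mathcal R_L(\Sigma_s)=[A^{L-1}B,\dots,AB,B]$, $\mathcal O_L(\Sigma_s)=[C^\top,(CA)^\top,\dots,(CA^{L-1})^\top]^\top$, and $\mathcal H_L(\Sigma_s)$ is the $Lr\times Lm$ block lower-triangular Toeplitz matrix with $(i,j)$ block $H_{i-j}$ for $j\le i$, where $H_0=0$, $H_k=CA^{k-1}B$. The $L$-length input–output history (IOH) is $v(t)=[u(t-L)^\top,\dots,u(t-1)^\top,y(t-L)^\top,\dots,y(t-1)^\top]^\top\in\mathbb R^{L(m+r)}$, $t\ge L$. $\Gamma=[\mathcal R_L-A^L\mathcal O_L^\dagger\mathcal H_L,\ A^L\mathcal O_L^\dagger]$ ($\dagger$: Moore–Penrose inverse). $\Theta=\mathrm{diag}(S_m,S_r)+EC\Gamma$,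 where $S_k$ is the $Lk\times Lk$ block matrix with $I_k$ in blocks $(i,i+1)$, $i=1,\dots,L-1$, zeros elsewhere, and $E\in\mathbb R^{L(m+r)\times r}$ has $I_r$ in its last $r$ rows and zeros elsewhere. $\Pi\in\mathbb R^{L(m+r)\times m}$ has $I_m$ in rows $(L-1)m+1,\dots,Lm$ and zeros elsewhere. *)

theory Defs
  imports "Jordan_Normal_Form.DL_Rank" "Jordan_Normal_Form.Char_Poly"
begin

text \<open>All matrices are Jordan_Normal_Form matrices over the reals with explicit
  dimensions; block matrices are described entrywise with 0-based indices.\<close>

definition mat_rank :: "real mat \<Rightarrow> nat" where
  "mat_rank M = vec_space.rank (dim_row M) M"

definition mat_image :: "real mat \<Rightarrow> real vec set" where
  "mat_image M = {M *\<^sub>v w | w. w \<in> carrier_vec (dim_col M)}"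

definition schur_mat :: "real mat \<Rightarrow> bool" where
  "schur_mat A \<longleftrightarrow> (\<forall>ev. eigenvalue (map_mat complex_of_real A) ev \<longrightarrow> cmod ev < 1)"

definition pinv :: "real mat \<Rightarrow> real mat" where
  "pinv M = (THE X. X \<in> carrier_mat (dim_col M) (dim_row M) \<and>
     M * X * M = M \<and> X * M * X = X \<and>
     transpose_mat (M * X) = M * X \<and> transpose_mat (X * M) = X * M)"

definition hcat :: "real mat \<Rightarrow> real mat \<Rightarrow> real mat" where
  "hcat P Q = mat (dim_row P) (dim_col P + dim_col Q)
     (\<lambda>(i,j). if j < dim_col P then P $$ (i,j) else Q $$ (i, j - dim_col P))"

text \<open>R_L = [A^(L-1) B, ..., A B, B]  (n x Lm)\<close>
definition reach_mat :: "nat \<Rightarrow> real mat \<Rightarrow> real mat \<Rightarrow> real mat" where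
  "reach_mat L A B = mat (dim_row A) (L * dim_col B)
     (\<lambda>(i,k). ((A ^\<^sub>m (L - 1 - k div dim_col B)) * B) $$ (i, k mod dim_col B))"

text \<open>O_L = [C; CA; ...; CA^(L-1)]  (Lr x n)\<close>
definition obs_mat :: "nat \<Rightarrow> real mat \<Rightarrow> real mat \<Rightarrow> real mat" where
  "obs_mat L A C = mat (L * dim_row C) (dim_col A)
     (\<lambda>(i,k). (C * (A ^\<^sub>m (i div dim_row C))) $$ (i mod dim_row C, k))"

definition markov :: "real mat \<Rightarrow> real mat \<Rightarrow> real mat \<Rightarrow> nat \<Rightarrow> real mat" where
  "markov A B C k = (if k = 0 then 0\<^sub>m (dim_row C) (dim_col B)
                     else C * (A ^\<^sub>m (k - 1)) * B)"

text \<open>H_L: Lr x Lm block lower triangular Toeplitz matrix with (i,j) block H_(i-j)\<close>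
definition toeplitz_mat :: "nat \<Rightarrow> real mat \<Rightarrow> real mat \<Rightarrow> real mat \<Rightarrow> real mat" where
  "toeplitz_mat L A B C = mat (L * dim_row C) (L * dim_col B)
     (\<lambda>(i,j). if j div dim_col B \<le> i div dim_row C
              then markov A B C (i div dim_row C - j div dim_col B) $$ (i mod dim_row C, j mod dim_col B)
              else 0)"

definition Gamma_mat :: "nat \<Rightarrow> real mat \<Rightarrow> real mat \<Rightarrow> real mat \<Rightarrow> real mat" where
  "Gamma_mat L A B C = hcat
     (reach_mat L A B - (A ^\<^sub>m L) * pinv (obs_mat L A C) * toeplitz_mat L A B C)
     ((A ^\<^sub>m L) * pinv (obs_mat L A C))"

text \<open>S_k: Lk x Lk, identity I_k in blocks (i,i+1)\<close>
definition shift_mat :: "nat \<Rightarrow> nat \<Rightarrow> real mat" where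
  "shift_mat L k = mat (L * k) (L * k)
     (\<lambda>(i,j). if j div k = i div k + 1 \<and> j mod k = i mod k then 1 else 0)"

text \<open>E: L(m+r) x r, I_r in the last r rows\<close>
definition E_mat :: "nat \<Rightarrow> nat \<Rightarrow> nat \<Rightarrow> real mat" where
  "E_mat L m r = mat (L * (m + r)) r (\<lambda>(i,j). if i = L * (m + r) - r + j then 1 else 0)"

text \<open>Pi: L(m+r) x m, I_m in rows (L-1)m+1..Lm (1-based)\<close>
definition Pi_mat :: "nat \<Rightarrow> nat \<Rightarrow> nat \<Rightarrow> real mat" where
  "Pi_mat L m r = mat (L * (m + r)) m (\<lambda>(i,j). if i = (L - 1) * m + j then 1 else 0)"

definition Theta_mat :: "nat \<Rightarrow> real mat \<Rightarrow> real mat \<Rightarrow> real mat \<Rightarrow> real mat" where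
  "Theta_mat L A B C =
     four_block_mat (shift_mat L (dim_col B)) (0\<^sub>m (L * dim_col B) (L * dim_row C))
                    (0\<^sub>m (L * dim_row C) (L * dim_col B)) (shift_mat L (dim_row C))
     + E_mat L (dim_col B) (dim_row C) * C * Gamma_mat L A B C"

text \<open>[Theta^(N-1) Pi, ..., Theta Pi, Pi] with N = L(m+r)\<close>
definition P_mat :: "nat \<Rightarrow> real mat \<Rightarrow> real mat \<Rightarrow> real mat \<Rightarrow> real mat" where
  "P_mat L A B C =
    (let m = dim_col B; r = dim_row C; N = L * (m + r);
         Th = Theta_mat L A B C; Pm = Pi_mat L m r
     in mat N (N * m) (\<lambda>(i,k). ((Th ^\<^sub>m (N - 1 - k div m)) * Pm) $$ (i, k mod m)))"

fun state :: "real mat \<Rightarrow> real mat \<Rightarrow> real vec \<Rightarrow> (nat \<Rightarrow> real vec) \<Rightarrow> nat \<Rightarrow> real vec" where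
  "state A B x0 u 0 = x0"
| "state A B x0 u (Suc t) = A *\<^sub>v state A B x0 u t + B *\<^sub>v u t"

text \<open>L-length input-output history
  v(t) = [u(t-L); ...; u(t-1); y(t-L); ...; y(t-1)] (meaningful for t \<ge> L)\<close>
definition ioh :: "nat \<Rightarrow> nat \<Rightarrow> nat \<Rightarrow> (nat \<Rightarrow> real vec) \<Rightarrow> (nat \<Rightarrow> real vec) \<Rightarrow> nat \<Rightarrow> real vec" where
  "ioh L m r u y t = vec (L * (m + r))
     (\<lambda>i. if i < L * m then u (t - L + i div m) $ (i mod m)
          else y (t - L + (i - L * m) div r) $ ((i - L * m) mod r))"

end

theory Submission
  imports Defs
begin

(*
  Write x = x(t - L) and let w be the window of the last L inputs. Unrolling the state recursion
  gives y(t - L + k) = C A^k x + sum_(l<k) C A^(k-1-l) B w_l, that is v(t) = [w; O_L x + H_L w]: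
  the IOH is a linear image of (w, x), injective because O_L is, so its range W has dimension
  Lm + n. Since pinv O_L is a left inverse of O_L, Gamma v(t) = A^L x + R_L w = x(t).
  Shifting the window shows that Theta [w; O_L x + H_L w] + Pi a = [w'; O_L x' + H_L w'] with
  x' = A x + B w_0 and w' the window w with a appended, for every element of W and not only along
  trajectories. This gives the recursion, and it shows that W is Theta-invariant and contains
  im Pi, so im P is contained in W. Conversely, starting at rest, controllability steers the state to any x in
  n steps and L further inputs fill any window w; the IOH so produced is a sum of Theta^q Pi u_q
  with q < L + n <= L(m + r), hence lies in im P.
*)

lemma add_mult_less_mult: "k < L \<Longrightarrow> c < r \<Longrightarrow> k * r + c < L * (r::nat)"
proof -
  assume "k < L" "c < r"
  then have "k * r + c < Suc k * r" by simp
  also have "\<dots> \<le> L * r" using \<open>k < L\<close> by (intro mult_le_mono1) simp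
  finally show ?thesis .
qed

lemma block_index_decomp:
  assumes "j < L * (r::nat)"
  shows "j div r < L" "j mod r < r" "j = j div r * r + j mod r"
proof -
  have "0 < r" using assms by (cases r) auto
  then show "j div r < L" "j mod r < r" "j = j div r * r + j mod r"
    using assms by (simp_all add: less_mult_imp_div_less)
qed

lemma mult_eq_pred_mult_add: "0 < L \<Longrightarrow> L * k = (L - 1) * k + (k::nat)"
  by (cases L) auto

lemma sum_lessThan_add: "(\<Sum>j<a + b. f j) = (\<Sum>j<a. f j) + (\<Sum>j<b. f (a + j))"
  for f :: "nat \<Rightarrow> 'a :: comm_monoid_add"
  by (induction b) (simp_all add: add.assoc)

lemma sum_lessThan_mult: "(\<Sum>j<K * m. f j) = (\<Sum>k<K. \<Sum>d<m. f (k * m + d))"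
  for f :: "nat \<Rightarrow> 'a :: comm_monoid_add"
  by (induction K) (simp_all add: sum_lessThan_add add.commute[of m])

lemma sum_indicator_shift:
  "(\<Sum>j<K. (if i = a + j then 1 else 0) * f j) = (if a \<le> i \<and> i < a + K then f (i - a) else 0)"
  for i a K :: nat and f :: "nat \<Rightarrow> 'a :: semiring_1"
proof (cases "a \<le> i")
  case True
  then have "(i = a + j) = (j = i - a)" for j by arith
  then have "(\<Sum>j<K. (if i = a + j then 1 else 0) * f j) = (\<Sum>j<K. if j = i - a then f j else 0)"
    by (intro sum.cong) auto
  then show ?thesis using True by auto
qed (auto intro!: sum.neutral)

lemma index_mult_mat_vec_sum:
  assumes "M \<in> carrier_mat p q" "i < p" "v \<in> carrier_vec q"
  shows "(M *\<^sub>v v) $ i = (\<Sum>j<q. M $$ (i,j) * v $ j)"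
  using assms by (auto simp: scalar_prod_def atLeast0LessThan)

lemma mult_mat_vec_unit_vec:
  fixes M :: "'a :: semiring_1 mat"
  assumes "M \<in> carrier_mat p q" "j < q"
  shows "M *\<^sub>v unit_vec q j = col M j"
  using assms by (intro eq_vecI) auto

lemma mat_eqI_mult_vec:
  fixes X Y :: "'a :: semiring_1 mat"
  assumes "X \<in> carrier_mat p q" "Y \<in> carrier_mat p q"
    and "\<And>z. z \<in> carrier_vec q \<Longrightarrow> X *\<^sub>v z = Y *\<^sub>v z"
  shows "X = Y"
proof (rule eq_matI)
  fix i j assume "i < dim_row Y" "j < dim_col Y"
  then show "X $$ (i,j) = Y $$ (i,j)"
    using assms mult_mat_vec_unit_vec[of _ p q j] by (metis carrier_matD index_col unit_vec_carrier)
qed (use assms in auto)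

lemma mult_mat_vec_zero [simp]: "M \<in> carrier_mat p q \<Longrightarrow> M *\<^sub>v 0\<^sub>v q = 0\<^sub>v p"
  by (intro eq_vecI) auto

lemma zero_mat_mult_vec [simp]: "x \<in> carrier_vec q \<Longrightarrow> 0\<^sub>m p q *\<^sub>v x = 0\<^sub>v p"
  by (intro eq_vecI) (auto simp: scalar_prod_def)

lemma hcat_mult_append_vec:
  fixes P Q :: "real mat"
  assumes P: "P \<in> carrier_mat p a" and Q: "Q \<in> carrier_mat p b"
    and v: "v \<in> carrier_vec a" and w: "w \<in> carrier_vec b"
  shows "hcat P Q *\<^sub>v (v @\<^sub>v w) = P *\<^sub>v v + Q *\<^sub>v w"
proof -
  have "hcat P Q = four_block_mat P Q (0\<^sub>m 0 a) (0\<^sub>m 0 b)"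
    using P Q by (intro eq_matI) (auto simp: hcat_def four_block_mat_def)
  then have "hcat P Q *\<^sub>v (v @\<^sub>v w) = (P *\<^sub>v v + Q *\<^sub>v w) @\<^sub>v (0\<^sub>m 0 a *\<^sub>v v + 0\<^sub>m 0 b *\<^sub>v w)"
    using four_block_mat_mult_vec[OF P Q zero_carrier_mat zero_carrier_mat v w] by simp
  also have "\<dots> = P *\<^sub>v v + Q *\<^sub>v w"
    using P Q by (intro eq_vecI) auto
  finally show ?thesis .
qed

section \<open>Rank and image of real matrices\<close>

lemma (in vec_space) maximal_indpt_cols_exists:
  obtains S where "maximal S (\<lambda>T. T \<subseteq> set (cols M) \<and> lin_indpt T)"
  using maximal_exists[of "(\<lambda>T. T \<subseteq> set (cols M) \<and> lin_indpt T)" "card (set (cols M))" "{}"]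
  by (meson List.finite_set card_mono empty_iff empty_subsetI finite_lin_indpt2 rev_finite_subset)

lemma (in vec_space) rank_lt_dim_col_if_not_distinct:
  assumes "A \<in> carrier_mat n nc" and "\<not> distinct (cols A)"
  shows "rank A < nc"
proof -
  obtain S where S: "maximal S (\<lambda>T. T \<subseteq> set (cols A) \<and> lin_indpt T)"
    by (rule maximal_indpt_cols_exists)
  then have "card S \<le> card (set (cols A))" by (simp add: card_mono maximal_def)
  moreover have "card (set (cols A)) < nc"
    using assms card_distinct[of "cols A"] card_length[of "cols A"]
    by (metis cols_length carrier_matD(2) le_neq_implies_less)
  ultimately show ?thesis using rank_card_indpt[OF assms(1) S] by simp
qed

lemma mat_rank_eq_dim_col_iff:
  fixes M :: "real mat"
  assumes M: "M \<in> carrier_mat p q"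
  shows "mat_rank M = q \<longleftrightarrow> (\<forall>z \<in> carrier_vec q. M *\<^sub>v z = 0\<^sub>v p \<longrightarrow> z = 0\<^sub>v q)"
proof -
  interpret vec_space "TYPE(real)" p .
  have rank: "mat_rank M = rank M" using M by (simp add: mat_rank_def)
  show ?thesis
  proof
    assume rk: "mat_rank M = q"
    have d: "distinct (cols M)"
      using rank_lt_dim_col_if_not_distinct[OF M] rk rank by fastforce
    have "lin_indpt (set (cols M))" using full_rank_lin_indpt[OF M _ d] rk rank by simp
    then show "\<forall>z \<in> carrier_vec q. M *\<^sub>v z = 0\<^sub>v p \<longrightarrow> z = 0\<^sub>v q"
      using lin_depI[OF M _ _ _ d] by blast
  next
    assume inj: "\<forall>z \<in> carrier_vec q. M *\<^sub>v z = 0\<^sub>v p \<longrightarrow> z = 0\<^sub>v q"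
    have d: "distinct (cols M)"
    proof (rule ccontr)
      assume "\<not> distinct (cols M)"
      then obtain i j where ij: "i < q" "j < q" "i \<noteq> j" "col M i = col M j"
        using M by (metis cols_length cols_nth carrier_matD(2) distinct_conv_nth)
      let ?z = "unit_vec q i - unit_vec q j :: real vec"
      have "M *\<^sub>v ?z = col M i - col M j"
        using M ij by (simp add: mult_minus_distrib_mat_vec mult_mat_vec_unit_vec)
      also have "\<dots> = 0\<^sub>v p" using ij M by (intro eq_vecI) auto
      finally have "?z = 0\<^sub>v q" using inj by simp
      then have "?z $ i = 0" using ij by simp
      then show False using ij by simp
    qed
    have "lin_indpt (set (cols M))"
      using lin_depE[OF M _ d] inj by metis
    then show "mat_rank M = q" using lin_indpt_full_rank[OF M d] rank by simp
  qed
qed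

lemma mat_rank_le_dim_row:
  fixes M :: "real mat"
  assumes M: "M \<in> carrier_mat p q"
  shows "mat_rank M \<le> p"
proof -
  interpret vec_space "TYPE(real)" p .
  obtain S where S: "maximal S (\<lambda>T. T \<subseteq> set (cols M) \<and> lin_indpt T)"
    by (rule maximal_indpt_cols_exists)
  then have "S \<subseteq> carrier_vec p" "lin_indpt S"
    using M cols_dim[of M] unfolding maximal_def by auto
  then have "card S \<le> dim" using li_le_dim(2)[OF fin_dim] by simp
  then show ?thesis using rank_card_indpt[OF M S] dim_is_n M by (simp add: mat_rank_def)
qed

lemma mat_rank_le_dim_col:
  fixes M :: "real mat"
  assumes "M \<in> carrier_mat p q"
  shows "mat_rank M \<le> q"
  using vec_space.rank_le_nc[OF assms] assms by (simp add: mat_rank_def)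

lemma mat_image_eq_col_space:
  fixes M :: "real mat"
  assumes M: "M \<in> carrier_mat p q"
  shows "mat_image M = vec_space.col_space p M"
  using vec_space.col_space_eq[OF M] M by (auto simp: mat_image_def)

lemma mat_image_eq_carrier_if_full_row_rank:
  fixes M :: "real mat"
  assumes M: "M \<in> carrier_mat p q" and rk: "mat_rank M = p"
  shows "mat_image M = carrier_vec p"
proof -
  interpret vec_space "TYPE(real)" p .
  obtain S where S: "maximal S (\<lambda>T. T \<subseteq> set (cols M) \<and> lin_indpt T)"
    by (rule maximal_indpt_cols_exists)
  have sub: "S \<subseteq> set (cols M)" and li: "lin_indpt S" using S unfolding maximal_def by auto
  have "S \<subseteq> carrier_vec p" using sub M cols_dim[of M] by auto
  moreover have "card S = p" using rank_card_indpt[OF M S] rk M by (simp add: mat_rank_def)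
  moreover have "finite S" using sub by (rule finite_subset) simp
  ultimately have "basis S" using dim_li_is_basis[OF fin_dim _ _ li] dim_is_n by simp
  then have "span S = carrier_vec p" unfolding basis_def by simp
  then have "carrier_vec p \<subseteq> col_space M"
    using span_is_monotone[OF sub] unfolding col_space_def by blast
  moreover have "col_space M \<subseteq> carrier_vec p"
    using M cols_dim[of M] unfolding col_space_def by (auto intro: span_closed)
  ultimately show ?thesis using mat_image_eq_col_space[OF M] by auto
qed

lemma mat_rank_eq_if_mat_image_eq:
  fixes M M' :: "real mat"
  assumes M: "M \<in> carrier_mat p q" and M': "M' \<in> carrier_mat p q'"
    and img: "mat_image M = mat_image M'"
  shows "mat_rank M = mat_rank M'"
proof -
  interpret vec_space "TYPE(real)" p .
  have "span (set (cols M)) = span (set (cols M'))"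
    using img mat_image_eq_col_space[OF M] mat_image_eq_col_space[OF M'] unfolding col_space_def by simp
  then have "rank M = rank M'" unfolding rank_def by simp
  then show ?thesis using M M' by (simp add: mat_rank_def)
qed

lemma mat_image_mult_vec: "z \<in> carrier_vec (dim_col M) \<Longrightarrow> M *\<^sub>v z \<in> mat_image M"
  unfolding mat_image_def by blast

lemma zero_mem_mat_image: "M \<in> carrier_mat p q \<Longrightarrow> 0\<^sub>v p \<in> mat_image M"
  using mat_image_mult_vec[of "0\<^sub>v q" M] by simp

lemma add_mem_mat_image:
  assumes "M \<in> carrier_mat p q" "a \<in> mat_image M" "b \<in> mat_image M"
  shows "a + b \<in> mat_image M"
proof -
  obtain z z' where "a = M *\<^sub>v z" "b = M *\<^sub>v z'" "z \<in> carrier_vec q" "z' \<in> carrier_vec q"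
    using assms unfolding mat_image_def by auto
  then have "a + b = M *\<^sub>v (z + z')" using assms(1) by (simp add: mult_add_distrib_mat_vec)
  then show ?thesis using \<open>z \<in> carrier_vec q\<close> \<open>z' \<in> carrier_vec q\<close> assms(1)
    by (simp add: mat_image_mult_vec)
qed

section \<open>The Moore-Penrose inverse of an injective matrix\<close>

definition is_pinv :: "real mat \<Rightarrow> real mat \<Rightarrow> bool" where
  "is_pinv M X \<longleftrightarrow> X \<in> carrier_mat (dim_col M) (dim_row M) \<and>
     M * X * M = M \<and> X * M * X = X \<and>
     transpose_mat (M * X) = M * X \<and> transpose_mat (X * M) = X * M"

lemma pinv_eq_The_is_pinv: "pinv M = (THE X. is_pinv M X)"
  by (simp add: pinv_def is_pinv_def)

lemma gram_mat_kernel_trivial: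
  fixes M :: "real mat"
  assumes M: "M \<in> carrier_mat p q" and inj: "\<forall>z \<in> carrier_vec q. M *\<^sub>v z = 0\<^sub>v p \<longrightarrow> z = 0\<^sub>v q"
    and z: "z \<in> carrier_vec q" and Gz: "(transpose_mat M * M) *\<^sub>v z = 0\<^sub>v q"
  shows "z = 0\<^sub>v q"
proof -
  have "(M *\<^sub>v z) \<bullet> (M *\<^sub>v z) = (transpose_mat M *\<^sub>v (M *\<^sub>v z)) \<bullet> z"
    using transpose_vec_mult_scalar[OF M z, of "M *\<^sub>v z"] M z by simp
  also have "transpose_mat M *\<^sub>v (M *\<^sub>v z) = 0\<^sub>v q"
    using Gz M z by (metis assoc_mult_mat_vec transpose_carrier_mat)
  finally have "(\<Sum>i<p. (M *\<^sub>v z) $ i * (M *\<^sub>v z) $ i) = 0"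
    using M z by (simp add: scalar_prod_def atLeast0LessThan)
  then have "\<forall>i<p. (M *\<^sub>v z) $ i * (M *\<^sub>v z) $ i = 0"
    by (subst (asm) sum_nonneg_eq_0_iff) auto
  then have "M *\<^sub>v z = 0\<^sub>v p" using M by (intro eq_vecI) auto
  then show ?thesis using inj z by blast
qed

lemma symmetric_inverse_of_gram_mat:
  fixes M :: "real mat"
  assumes M: "M \<in> carrier_mat p q" and inj: "\<forall>z \<in> carrier_vec q. M *\<^sub>v z = 0\<^sub>v p \<longrightarrow> z = 0\<^sub>v q"
  obtains G' where "G' \<in> carrier_mat q q" "G' * (transpose_mat M * M) = 1\<^sub>m q"
    "transpose_mat G' = G'"
proof
  define G where "G = transpose_mat M * M"
  have G: "G \<in> carrier_mat q q" using M unfolding G_def by simp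
  have "det G \<noteq> 0"
    using det_0_iff_vec_prod_zero_field[OF G] gram_mat_kernel_trivial[OF M inj] unfolding G_def by blast
  define G' where "G' = (1 / det G) \<cdot>\<^sub>m adj_mat G"
  show G': "G' \<in> carrier_mat q q" unfolding G'_def using adj_mat(1)[OF G] by simp
  have "G' * G = (1 / det G) \<cdot>\<^sub>m (adj_mat G * G)" and "G * G' = (1 / det G) \<cdot>\<^sub>m (G * adj_mat G)"
    unfolding G'_def using adj_mat(1)[OF G] G by (simp_all add: mult_smult_distrib mult_smult_assoc_mat)
  moreover have "(1 / det G) \<cdot>\<^sub>m (det G \<cdot>\<^sub>m 1\<^sub>m q) = 1\<^sub>m q"
    using \<open>det G \<noteq> 0\<close> by (intro eq_matI) auto
  ultimately have left: "G' * G = 1\<^sub>m q" and right: "G * G' = 1\<^sub>m q"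
    by (simp_all add: adj_mat(2,3)[OF G])
  from left show "G' * (transpose_mat M * M) = 1\<^sub>m q" unfolding G_def .
  have Gt: "transpose_mat G = G" unfolding G_def using M by (simp add: transpose_mult)
  have "transpose_mat G' = transpose_mat G' * (G * G')" using G' by (simp add: right)
  also have "\<dots> = (transpose_mat G' * transpose_mat G) * G'"
    using G G' Gt by (simp add: assoc_mult_mat[of _ q q])
  also have "transpose_mat G' * transpose_mat G = 1\<^sub>m q"
    using transpose_mult[OF G G'] right by simp
  finally show "transpose_mat G' = G'" using G' by simp
qed

lemma is_pinv_exists:
  fixes M :: "real mat"
  assumes M: "M \<in> carrier_mat p q" and inj: "\<forall>z \<in> carrier_vec q. M *\<^sub>v z = 0\<^sub>v p \<longrightarrow> z = 0\<^sub>v q"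
  shows "\<exists>X. is_pinv M X"
proof -
  obtain G' where G': "G' \<in> carrier_mat q q" and left: "G' * (transpose_mat M * M) = 1\<^sub>m q"
    and sym: "transpose_mat G' = G'"
    using symmetric_inverse_of_gram_mat[OF M inj] .
  define X where "X = G' * transpose_mat M"
  have X: "X \<in> carrier_mat q p" unfolding X_def using G' M by simp
  have Mt: "transpose_mat M \<in> carrier_mat q p" using M by simp
  have XM: "X * M = 1\<^sub>m q"
    unfolding X_def using assoc_mult_mat[OF G' Mt M] left by simp
  have "transpose_mat (M * X) = transpose_mat X * transpose_mat M"
    using transpose_mult[OF M X] .
  also have "transpose_mat X = M * G'"
    unfolding X_def using transpose_mult[OF G' Mt] sym by simp
  also have "M * G' * transpose_mat M = M * X"
    unfolding X_def using assoc_mult_mat[OF M G' Mt] .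
  finally have "transpose_mat (M * X) = M * X" .
  moreover have "M * X * M = M" "X * M * X = X"
    using assoc_mult_mat[OF M X M] XM M X by simp_all
  ultimately have "is_pinv M X" using M X XM by (simp add: is_pinv_def)
  then show ?thesis ..
qed

lemma is_pinv_left_inverse:
  fixes M :: "real mat"
  assumes M: "M \<in> carrier_mat p q" and inj: "\<forall>z \<in> carrier_vec q. M *\<^sub>v z = 0\<^sub>v p \<longrightarrow> z = 0\<^sub>v q"
    and Y: "is_pinv M Y"
  shows "Y * M = 1\<^sub>m q"
proof (rule mat_eqI_mult_vec)
  have Yc: "Y \<in> carrier_mat q p" and MYM: "M * Y * M = M" using Y M by (auto simp: is_pinv_def)
  then show "Y * M \<in> carrier_mat q q" using M by simp
  fix z :: "real vec" assume z: "z \<in> carrier_vec q"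
  have Mz: "M *\<^sub>v z \<in> carrier_vec p" using M z by simp
  have "M *\<^sub>v ((Y * M) *\<^sub>v z) = M *\<^sub>v (Y *\<^sub>v (M *\<^sub>v z))"
    using assoc_mult_mat_vec[OF Yc M z] by simp
  also have "\<dots> = (M * Y * M) *\<^sub>v z"
    using assoc_mult_mat_vec[OF M Yc Mz] assoc_mult_mat_vec[OF mult_carrier_mat[OF M Yc] M z] by simp
  finally have "M *\<^sub>v ((Y * M) *\<^sub>v z) = (M * Y * M) *\<^sub>v z" .
  then have "M *\<^sub>v ((Y * M) *\<^sub>v z - z) = 0\<^sub>v p"
    using M Yc z MYM by (simp add: mult_minus_distrib_mat_vec)
  then have diff: "(Y * M) *\<^sub>v z - z = 0\<^sub>v q" using inj M Yc z by simp
  show "(Y * M) *\<^sub>v z = 1\<^sub>m q *\<^sub>v z"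
  proof (rule eq_vecI)
    fix i assume "i < dim_vec (1\<^sub>m q *\<^sub>v z)"
    then show "((Y * M) *\<^sub>v z) $ i = (1\<^sub>m q *\<^sub>v z) $ i"
      using arg_cong[OF diff, of "\<lambda>v. v $ i"] M Yc z by simp
  qed (use M Yc in simp)
qed simp

lemma is_pinv_unique:
  fixes M :: "real mat"
  assumes M: "M \<in> carrier_mat p q" and inj: "\<forall>z \<in> carrier_vec q. M *\<^sub>v z = 0\<^sub>v p \<longrightarrow> z = 0\<^sub>v q"
    and X: "is_pinv M X" and Y: "is_pinv M Y"
  shows "X = Y"
proof -
  have Xc: "X \<in> carrier_mat q p" and Yc: "Y \<in> carrier_mat q p"
    and symX: "transpose_mat (M * X) = M * X" and symY: "transpose_mat (M * Y) = M * Y"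
    using X Y M by (auto simp: is_pinv_def)
  have XM: "X * M = 1\<^sub>m q" and YM: "Y * M = 1\<^sub>m q"
    using is_pinv_left_inverse[OF M inj] X Y by auto
  have XY: "M * X * (M * Y) = M * Y"
    unfolding assoc_mult_mat[OF mult_carrier_mat[OF M Xc] M Yc, symmetric] assoc_mult_mat[OF M Xc M] XM
    using M by simp
  have YX: "M * Y * (M * X) = M * X"
    unfolding assoc_mult_mat[OF mult_carrier_mat[OF M Yc] M Xc, symmetric] assoc_mult_mat[OF M Yc M] YM
    using M by simp
  have "M * X = transpose_mat (M * Y * (M * X))" using YX symX by simp
  also have "\<dots> = M * X * (M * Y)"
    using transpose_mult[OF mult_carrier_mat[OF M Yc] mult_carrier_mat[OF M Xc]] symX symY by simp
  also note XY
  finally have MXY: "M * X = M * Y" .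
  have "X = X * M * X" using X by (simp add: is_pinv_def)
  also have "\<dots> = X * (M * Y)" unfolding assoc_mult_mat[OF Xc M Xc] MXY ..
  also have "\<dots> = Y" unfolding assoc_mult_mat[OF Xc M Yc, symmetric] XM using Yc by simp
  finally show ?thesis .
qed

lemma pinv_left_inverse:
  fixes M :: "real mat"
  assumes M: "M \<in> carrier_mat p q" and inj: "\<forall>z \<in> carrier_vec q. M *\<^sub>v z = 0\<^sub>v p \<longrightarrow> z = 0\<^sub>v q"
  shows "pinv M \<in> carrier_mat q p" "pinv M * M = 1\<^sub>m q"
proof -
  have "is_pinv M (THE X. is_pinv M X)"
    by (rule theI'[OF ex_ex1I[OF is_pinv_exists[OF M inj] is_pinv_unique[OF M inj]]])
  then have pinv: "is_pinv M (pinv M)" by (simp only: pinv_eq_The_is_pinv)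
  then show "pinv M \<in> carrier_mat q p" using M by (simp add: is_pinv_def)
  show "pinv M * M = 1\<^sub>m q" by (rule is_pinv_left_inverse[OF M inj pinv])
qed

definition sum_vec :: "nat \<Rightarrow> (nat \<Rightarrow> 'a :: comm_monoid_add vec) \<Rightarrow> nat \<Rightarrow> 'a vec" where
  "sum_vec d f K = vec d (\<lambda>i. \<Sum>k<K. f k $ i)"

lemma sum_vec_carrier [simp]: "sum_vec d f K \<in> carrier_vec d"
  and dim_sum_vec [simp]: "dim_vec (sum_vec d f K) = d"
  and index_sum_vec [simp]: "i < d \<Longrightarrow> sum_vec d f K $ i = (\<Sum>k<K. f k $ i)"
  by (auto simp: sum_vec_def)

lemma sum_vec_0 [simp]: "sum_vec d f 0 = 0\<^sub>v d"
  by (intro eq_vecI) auto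

lemma sum_vec_Suc: "f K \<in> carrier_vec d \<Longrightarrow> sum_vec d f (Suc K) = sum_vec d f K + f K"
  by (intro eq_vecI) auto

lemma sum_vec_Suc_shift: "f 0 \<in> carrier_vec d \<Longrightarrow> sum_vec d f (Suc K) = f 0 + sum_vec d (\<lambda>k. f (Suc k)) K"
  by (intro eq_vecI) (auto simp del: sum.lessThan_Suc simp add: sum.lessThan_Suc_shift)

lemma sum_vec_cong: "(\<And>k. k < K \<Longrightarrow> f k = g k) \<Longrightarrow> sum_vec d f K = sum_vec d g K"
  by (intro eq_vecI) auto

lemma mult_mat_vec_sum_vec:
  fixes M :: "'a :: comm_semiring_0 mat"
  assumes M: "M \<in> carrier_mat p d" and f: "\<And>k. k < K \<Longrightarrow> f k \<in> carrier_vec d"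
  shows "M *\<^sub>v sum_vec d f K = sum_vec p (\<lambda>k. M *\<^sub>v f k) K"
proof (rule eq_vecI)
  fix i assume "i < dim_vec (sum_vec p (\<lambda>k. M *\<^sub>v f k) K)"
  then have i: "i < p" by simp
  have "(M *\<^sub>v sum_vec d f K) $ i = (\<Sum>j<d. M $$ (i,j) * (\<Sum>k<K. f k $ j))"
    using M i by (subst index_mult_mat_vec_sum[OF M]) auto
  also have "\<dots> = (\<Sum>k<K. \<Sum>j<d. M $$ (i,j) * f k $ j)"
    by (simp add: sum_distrib_left sum.swap[of _ "{..<d}"])
  also have "\<dots> = (\<Sum>k<K. (M *\<^sub>v f k) $ i)"
    using M i f by (intro sum.cong refl) (subst index_mult_mat_vec_sum[OF M], auto)
  finally show "(M *\<^sub>v sum_vec d f K) $ i = sum_vec p (\<lambda>k. M *\<^sub>v f k) K $ i"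
    using i by simp
qed (use M in simp)

lemma sum_vec_mem:
  assumes "0\<^sub>v d \<in> S" and "\<And>a b. a \<in> S \<Longrightarrow> b \<in> S \<Longrightarrow> a + b \<in> S"
    and "\<And>k. k < K \<Longrightarrow> f k \<in> S" and "\<And>k. k < K \<Longrightarrow> f k \<in> carrier_vec d"
  shows "sum_vec d f K \<in> S"
  using assms(3,4) by (induction K) (simp_all add: assms(1,2) sum_vec_Suc)

definition vec_block :: "nat \<Rightarrow> 'a vec \<Rightarrow> nat \<Rightarrow> 'a vec" where
  "vec_block m w l = vec m (\<lambda>d. w $ (l * m + d))"

lemma vec_block_carrier [simp]: "vec_block m w l \<in> carrier_vec m"
  and dim_vec_block [simp]: "dim_vec (vec_block m w l) = m"
  and index_vec_block [simp]: "d < m \<Longrightarrow> vec_block m w l $ d = w $ (l * m + d)"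
  by (auto simp: vec_block_def)

definition block_row :: "nat \<Rightarrow> nat \<Rightarrow> nat \<Rightarrow> (nat \<Rightarrow> 'a mat) \<Rightarrow> 'a mat" where
  "block_row p m K F = mat p (K * m) (\<lambda>(i, j). F (j div m) $$ (i, j mod m))"

lemma block_row_carrier [simp]: "block_row p m K F \<in> carrier_mat p (K * m)"
  and dim_row_block_row [simp]: "dim_row (block_row p m K F) = p"
  and dim_col_block_row [simp]: "dim_col (block_row p m K F) = K * m"
  by (simp_all add: block_row_def)

lemma block_row_mult_vec:
  fixes F :: "nat \<Rightarrow> 'a :: comm_semiring_0 mat"
  assumes F: "\<And>k. k < K \<Longrightarrow> F k \<in> carrier_mat p m" and z: "z \<in> carrier_vec (K * m)"
  shows "block_row p m K F *\<^sub>v z = sum_vec p (\<lambda>k. F k *\<^sub>v vec_block m z k) K"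
proof (rule eq_vecI)
  fix i assume "i < dim_vec (sum_vec p (\<lambda>k. F k *\<^sub>v vec_block m z k) K)"
  then have i: "i < p" by simp
  have "(block_row p m K F *\<^sub>v z) $ i = (\<Sum>j<K * m. F (j div m) $$ (i, j mod m) * z $ j)"
    using i z by (subst index_mult_mat_vec_sum[OF block_row_carrier]) (auto simp: block_row_def)
  also have "\<dots> = (\<Sum>k<K. \<Sum>d<m. F k $$ (i, d) * z $ (k * m + d))"
    unfolding sum_lessThan_mult by (intro sum.cong refl) simp
  also have "\<dots> = (\<Sum>k<K. (F k *\<^sub>v vec_block m z k) $ i)"
    using F i by (intro sum.cong refl) (subst index_mult_mat_vec_sum[OF F], auto)
  finally show "(block_row p m K F *\<^sub>v z) $ i = sum_vec p (\<lambda>k. F k *\<^sub>v vec_block m z k) K $ i"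
    using i by simp
qed (simp add: block_row_def)

lemma block_mult_vec_mem_mat_image:
  fixes F :: "nat \<Rightarrow> real mat"
  assumes F: "\<And>k. k < K \<Longrightarrow> F k \<in> carrier_mat p m" and k: "k < K" and a: "a \<in> carrier_vec m"
  shows "F k *\<^sub>v a \<in> mat_image (block_row p m K F)"
proof -
  define z where "z = vec (K * m) (\<lambda>i. if i div m = k then a $ (i mod m) else 0)"
  have z: "z \<in> carrier_vec (K * m)" unfolding z_def by simp
  have blocks: "vec_block m z j = (if j = k then a else 0\<^sub>v m)" if "j < K" for j
  proof (rule eq_vecI)
    fix d assume "d < dim_vec (if j = k then a else 0\<^sub>v m)"
    then have "d < m" using a by (simp split: if_splits)
    then show "vec_block m z j $ d = (if j = k then a else 0\<^sub>v m) $ d"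
      using add_mult_less_mult[OF \<open>j < K\<close>] by (simp add: z_def)
  qed (use a in simp)
  have "block_row p m K F *\<^sub>v z = sum_vec p (\<lambda>j. F j *\<^sub>v vec_block m z j) K"
    by (rule block_row_mult_vec[OF F z])
  also have "\<dots> = sum_vec p (\<lambda>j. if j = k then F k *\<^sub>v a else 0\<^sub>v p) K"
    using F by (intro sum_vec_cong) (simp add: blocks)
  also have "\<dots> = F k *\<^sub>v a"
    using F[OF k] k by (intro eq_vecI) (simp_all add: if_distrib[of "\<lambda>v. v $ _"] cong: if_cong)
  finally have "block_row p m K F *\<^sub>v z = F k *\<^sub>v a" .
  moreover have "block_row p m K F *\<^sub>v z \<in> mat_image (block_row p m K F)"
    using z by (intro mat_image_mult_vec) simp
  ultimately show ?thesis by simp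
qed

section \<open>Trajectories of the state recursion\<close>

lemma state_carrier:
  assumes "A \<in> carrier_mat n n" "B \<in> carrier_mat n m" "x \<in> carrier_vec n"
  shows "state A B x u t \<in> carrier_vec n"
  using assms by (cases t) (auto intro!: carrier_vecI)

lemma state_add: "state A B x u (s + k) = state A B (state A B x u s) (\<lambda>l. u (s + l)) k"
  by (induction k) simp_all

lemma state_Suc_shift: "state A B x u (Suc k) = state A B (A *\<^sub>v x + B *\<^sub>v u 0) (\<lambda>l. u (Suc l)) k"
  using state_add[of A B x u 1 k] by simp

lemma state_cong: "(\<And>l. l < k \<Longrightarrow> u l = u' l) \<Longrightarrow> state A B x u k = state A B x u' k"
  by (induction k) simp_all

lemma state_zero:
  assumes "A \<in> carrier_mat n n" "B \<in> carrier_mat n m"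
  shows "state A B (0\<^sub>v n) (\<lambda>_. 0\<^sub>v m) k = 0\<^sub>v n"
  using assms by (induction k) simp_all

lemma recurrence_eq_state:
  assumes "\<And>t. s \<le> t \<Longrightarrow> v (Suc t) = T *\<^sub>v v t + P *\<^sub>v a t"
  shows "v (s + j) = state T P (v s) (\<lambda>l. a (s + l)) j"
  using assms by (induction j) simp_all

lemma state_closed_form:
  assumes A: "A \<in> carrier_mat n n" and B: "B \<in> carrier_mat n m" and x: "x \<in> carrier_vec n"
    and u: "\<And>l. l < k \<Longrightarrow> u l \<in> carrier_vec m"
  shows "state A B x u k = A ^\<^sub>m k *\<^sub>v x + sum_vec n (\<lambda>l. (A ^\<^sub>m (k - 1 - l) * B) *\<^sub>v u l) k"
  using x u
proof (induction k arbitrary: x u)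
  case 0
  then show ?case using A by simp
next
  case (Suc k)
  have Ak: "A ^\<^sub>m k \<in> carrier_mat n n" using A by simp
  have u0: "u 0 \<in> carrier_vec m" using Suc.prems(2) by simp
  let ?x' = "A *\<^sub>v x + B *\<^sub>v u 0"
  let ?S = "sum_vec n (\<lambda>l. (A ^\<^sub>m (k - 1 - l) * B) *\<^sub>v u (Suc l)) k"
  have x': "?x' \<in> carrier_vec n" using A B by (auto intro!: carrier_vecI)
  have "state A B x u (Suc k) = state A B ?x' (\<lambda>l. u (Suc l)) k"
    by (rule state_Suc_shift)
  also have "\<dots> = A ^\<^sub>m k *\<^sub>v ?x' + ?S"
    using Suc.IH[OF x'] Suc.prems(2) by simp
  also have "A ^\<^sub>m k *\<^sub>v ?x' = A ^\<^sub>m Suc k *\<^sub>v x + (A ^\<^sub>m k * B) *\<^sub>v u 0"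
    using mult_add_distrib_mat_vec[OF Ak _ _] assoc_mult_mat_vec[OF Ak A Suc.prems(1)]
      assoc_mult_mat_vec[OF Ak B u0] A B Suc.prems(1) u0 by simp
  also have "\<dots> + ?S = A ^\<^sub>m Suc k *\<^sub>v x + ((A ^\<^sub>m k * B) *\<^sub>v u 0 + ?S)"
    using mult_carrier_mat[OF Ak A] mult_carrier_mat[OF Ak B] Suc.prems(1) u0
    by (intro assoc_add_vec[of _ n]) auto
  also have "(A ^\<^sub>m k * B) *\<^sub>v u 0 + ?S
      = sum_vec n (\<lambda>l. (A ^\<^sub>m (Suc k - 1 - l) * B) *\<^sub>v u l) (Suc k)"
    using mult_carrier_mat[OF Ak B] u0 by (subst sum_vec_Suc_shift) auto
  finally show ?case .
qed

lemma reach_mat_eq_block_row: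
  assumes "A \<in> carrier_mat n n" "B \<in> carrier_mat n m"
  shows "reach_mat K A B = block_row n m K (\<lambda>k. A ^\<^sub>m (K - 1 - k) * B)"
  using assms by (simp add: reach_mat_def block_row_def)

lemma state_eq_reach_mat:
  assumes A: "A \<in> carrier_mat n n" and B: "B \<in> carrier_mat n m"
    and x: "x \<in> carrier_vec n" and z: "z \<in> carrier_vec (K * m)"
  shows "state A B x (vec_block m z) K = A ^\<^sub>m K *\<^sub>v x + reach_mat K A B *\<^sub>v z"
proof -
  have "reach_mat K A B *\<^sub>v z = sum_vec n (\<lambda>k. (A ^\<^sub>m (K - 1 - k) * B) *\<^sub>v vec_block m z k) K"
    unfolding reach_mat_eq_block_row[OF A B] using A B z by (intro block_row_mult_vec) auto
  then show ?thesis by (simp add: state_closed_form[OF A B x])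
qed

lemma index_shift_mat:
  assumes "i < L * k" "j < L * k"
  shows "shift_mat L k $$ (i, j) = (if j = i + k then 1 else 0)"
proof -
  have "0 < k" using assms by (cases k) auto
  have "j div k = i div k + 1 \<and> j mod k = i mod k \<longleftrightarrow> j = i + k"
  proof
    assume "j div k = i div k + 1 \<and> j mod k = i mod k"
    then have "k * (j div k) + j mod k = k * (i div k) + i mod k + k" by (simp add: algebra_simps)
    then show "j = i + k" by simp
  qed (use \<open>0 < k\<close> in simp)
  then show ?thesis using assms by (simp add: shift_mat_def)
qed

lemma shift_mat_mult_vec:
  assumes "v \<in> carrier_vec (L * k)" "0 < L"
  shows "shift_mat L k *\<^sub>v v = vec_last v ((L - 1) * k) @\<^sub>v 0\<^sub>v k"
proof (rule eq_vecI)
  note Lk = mult_eq_pred_mult_add[OF \<open>0 < L\<close>, of k]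
  fix i assume "i < dim_vec (vec_last v ((L - 1) * k) @\<^sub>v 0\<^sub>v k)"
  then have i: "i < L * k" using Lk by simp
  have "(shift_mat L k *\<^sub>v v) $ i = (\<Sum>j<L * k. (if j = i + k then 1 else 0) * v $ j)"
    using i assms(1) by (subst index_mult_mat_vec_sum[of _ "L * k" "L * k"])
      (auto simp: shift_mat_def index_shift_mat[symmetric] intro!: sum.cong)
  also have "\<dots> = (if i + k < L * k then v $ (i + k) else 0)"
    by (simp add: if_distrib[of "\<lambda>c. c * _"] cong: if_cong)
  finally show "(shift_mat L k *\<^sub>v v) $ i = (vec_last v ((L - 1) * k) @\<^sub>v 0\<^sub>v k) $ i"
    using i assms(1) Lk by (auto simp: vec_last_def add.commute)
qed (use assms mult_eq_pred_mult_add[OF \<open>0 < L\<close>, of k] in \<open>auto simp: shift_mat_def\<close>)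

lemma shift_mat_mult_vec_add:
  assumes v: "v \<in> carrier_vec (L * k)" and a: "a \<in> carrier_vec k" and L: "0 < L"
  shows "shift_mat L k *\<^sub>v v + (0\<^sub>v ((L - 1) * k) @\<^sub>v a) = vec_last v ((L - 1) * k) @\<^sub>v a"
  using a unfolding shift_mat_mult_vec[OF v L]
  by (subst append_vec_add[of _ "(L - 1) * k" _ _ k]) auto

lemma E_mat_mult_vec:
  assumes g: "g \<in> carrier_vec r" and L: "0 < L"
  shows "E_mat L m r *\<^sub>v g = 0\<^sub>v (L * m) @\<^sub>v 0\<^sub>v ((L - 1) * r) @\<^sub>v g"
proof (rule eq_vecI)
  have N: "L * (m + r) = L * m + ((L - 1) * r + r)"
    using mult_eq_pred_mult_add[OF L, of r] by (simp add: distrib_left)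
  fix i assume "i < dim_vec (0\<^sub>v (L * m) @\<^sub>v 0\<^sub>v ((L - 1) * r) @\<^sub>v g :: real vec)"
  then have i: "i < L * (m + r)" using g N by simp
  have "(E_mat L m r *\<^sub>v g) $ i = (\<Sum>j<r. (if i = (L * (m + r) - r) + j then 1 else 0) * g $ j)"
    using i g by (subst index_mult_mat_vec_sum[of _ "L * (m + r)" r]) (auto simp: E_mat_def)
  also have "\<dots> = (if L * (m + r) - r \<le> i then g $ (i - (L * (m + r) - r)) else 0)"
    using i N by (simp add: sum_indicator_shift)
  finally show "(E_mat L m r *\<^sub>v g) $ i = (0\<^sub>v (L * m) @\<^sub>v 0\<^sub>v ((L - 1) * r) @\<^sub>v g) $ i"
    using i g N by auto
qed (use g in \<open>simp add: E_mat_def mult_eq_pred_mult_add[OF L, of r] distrib_left\<close>)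

lemma Pi_mat_mult_vec:
  assumes a: "a \<in> carrier_vec m" and L: "0 < L"
  shows "Pi_mat L m r *\<^sub>v a = (0\<^sub>v ((L - 1) * m) @\<^sub>v a) @\<^sub>v 0\<^sub>v (L * r)"
proof (rule eq_vecI)
  have N: "L * (m + r) = ((L - 1) * m + m) + L * r"
    using mult_eq_pred_mult_add[OF L, of m] by (simp add: distrib_left)
  fix i assume "i < dim_vec ((0\<^sub>v ((L - 1) * m) @\<^sub>v a) @\<^sub>v 0\<^sub>v (L * r) :: real vec)"
  then have i: "i < L * (m + r)" using a N by simp
  have "(Pi_mat L m r *\<^sub>v a) $ i = (\<Sum>j<m. (if i = (L - 1) * m + j then 1 else 0) * a $ j)"
    using i a by (subst index_mult_mat_vec_sum[of _ "L * (m + r)" m]) (auto simp: Pi_mat_def)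
  also have "\<dots> = (if (L - 1) * m \<le> i \<and> i < (L - 1) * m + m then a $ (i - (L - 1) * m) else 0)"
    by (rule sum_indicator_shift)
  finally show "(Pi_mat L m r *\<^sub>v a) $ i = ((0\<^sub>v ((L - 1) * m) @\<^sub>v a) @\<^sub>v 0\<^sub>v (L * r)) $ i"
    using i a N by auto
qed (use a in \<open>simp add: Pi_mat_def mult_eq_pred_mult_add[OF L, of m] distrib_left\<close>)

locale lti_system =
  fixes n m r L :: nat and A B C :: "real mat"
  assumes A: "A \<in> carrier_mat n n" and B: "B \<in> carrier_mat n m" and C: "C \<in> carrier_mat r n"
begin

abbreviation "O\<^sub>L \<equiv> obs_mat L A C"
abbreviation "H\<^sub>L \<equiv> toeplitz_mat L A B C"

lemma dim_system_mats [simp]: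
  "dim_row A = n" "dim_col A = n" "dim_row B = n" "dim_col B = m" "dim_row C = r" "dim_col C = n"
  using A B C by auto

lemma power_products_carrier [simp]:
  "A ^\<^sub>m k \<in> carrier_mat n n" "A ^\<^sub>m k * B \<in> carrier_mat n m"
  "C * A ^\<^sub>m k \<in> carrier_mat r n" "C * A ^\<^sub>m k * B \<in> carrier_mat r m"
  using A B C by (auto intro!: mult_carrier_mat[of _ _ n])

lemma obs_mat_carrier: "O\<^sub>L \<in> carrier_mat (L * r) n"
  and dim_obs_mat [simp]: "dim_row O\<^sub>L = L * r" "dim_col O\<^sub>L = n"
  by (simp_all add: obs_mat_def)

lemma toeplitz_mat_carrier: "H\<^sub>L \<in> carrier_mat (L * r) (L * m)"
  and dim_toeplitz_mat [simp]: "dim_row H\<^sub>L = L * r" "dim_col H\<^sub>L = L * m"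
  by (simp_all add: toeplitz_mat_def)

lemma output_closed_form:
  assumes x: "x \<in> carrier_vec n" and f: "\<And>l. l < k \<Longrightarrow> f l \<in> carrier_vec m"
  shows "C *\<^sub>v state A B x f k
    = (C * A ^\<^sub>m k) *\<^sub>v x + sum_vec r (\<lambda>l. (C * A ^\<^sub>m (k - 1 - l) * B) *\<^sub>v f l) k"
proof -
  have "C *\<^sub>v state A B x f k
      = C *\<^sub>v (A ^\<^sub>m k *\<^sub>v x + sum_vec n (\<lambda>l. (A ^\<^sub>m (k - 1 - l) * B) *\<^sub>v f l) k)"
    by (rule arg_cong[where f="\<lambda>v. C *\<^sub>v v"], rule state_closed_form[OF A B x f])
  also have "\<dots> = C *\<^sub>v (A ^\<^sub>m k *\<^sub>v x) + C *\<^sub>v sum_vec n (\<lambda>l. (A ^\<^sub>m (k - 1 - l) * B) *\<^sub>v f l) k"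
    by (rule mult_add_distrib_mat_vec[OF C mult_mat_vec_carrier[OF pow_carrier_mat[OF A] x] sum_vec_carrier])
  also have "C *\<^sub>v sum_vec n (\<lambda>l. (A ^\<^sub>m (k - 1 - l) * B) *\<^sub>v f l) k
      = sum_vec r (\<lambda>l. C *\<^sub>v ((A ^\<^sub>m (k - 1 - l) * B) *\<^sub>v f l)) k"
    by (rule mult_mat_vec_sum_vec[OF C]) (rule mult_mat_vec_carrier[OF power_products_carrier(2) f])
  also have "\<dots> = sum_vec r (\<lambda>l. (C * A ^\<^sub>m (k - 1 - l) * B) *\<^sub>v f l) k"
    using f by (intro sum_vec_cong)
      (simp add: assoc_mult_mat_vec[OF C power_products_carrier(2)] assoc_mult_mat[OF C power_products_carrier(1) B])
  finally show ?thesis using assoc_mult_mat_vec[OF C _ x, of "A ^\<^sub>m k"] A by simp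
qed

lemma obs_mat_mult_vec_index:
  assumes k: "k < L" and c: "c < r" and x: "x \<in> carrier_vec n"
  shows "(O\<^sub>L *\<^sub>v x) $ (k * r + c) = ((C * A ^\<^sub>m k) *\<^sub>v x) $ c"
proof -
  have "(O\<^sub>L *\<^sub>v x) $ (k * r + c) = (\<Sum>j<n. O\<^sub>L $$ (k * r + c, j) * x $ j)"
    using add_mult_less_mult[OF k c] x by (intro index_mult_mat_vec_sum[OF obs_mat_carrier])
  also have "\<dots> = (\<Sum>j<n. (C * A ^\<^sub>m k) $$ (c, j) * x $ j)"
    using add_mult_less_mult[OF k c] c by (simp add: obs_mat_def)
  also have "\<dots> = ((C * A ^\<^sub>m k) *\<^sub>v x) $ c"
    using c x by (intro index_mult_mat_vec_sum[OF power_products_carrier(3), symmetric])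
  finally show ?thesis .
qed

lemma toeplitz_mat_index:
  assumes "k < L" "c < r" "l < L" "d < m"
  shows "H\<^sub>L $$ (k * r + c, l * m + d) = (if l < k then (C * A ^\<^sub>m (k - 1 - l) * B) $$ (c, d) else 0)"
  using assms add_mult_less_mult[of k L c r] add_mult_less_mult[of l L d m]
  by (auto simp: toeplitz_mat_def markov_def diff_commute)

lemma toeplitz_mat_mult_vec_index:
  assumes k: "k < L" and c: "c < r" and w: "w \<in> carrier_vec (L * m)"
  shows "(H\<^sub>L *\<^sub>v w) $ (k * r + c)
    = (\<Sum>l<k. ((C * A ^\<^sub>m (k - 1 - l) * B) *\<^sub>v vec_block m w l) $ c)"
proof -
  let ?H = "\<lambda>l. C * A ^\<^sub>m (k - 1 - l) * B"
  have "(H\<^sub>L *\<^sub>v w) $ (k * r + c) = (\<Sum>j<L * m. H\<^sub>L $$ (k * r + c, j) * w $ j)"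
    using add_mult_less_mult[OF k c] w toeplitz_mat_carrier
    by (intro index_mult_mat_vec_sum)
  also have "\<dots> = (\<Sum>l<L. \<Sum>d<m. H\<^sub>L $$ (k * r + c, l * m + d) * w $ (l * m + d))"
    by (rule sum_lessThan_mult)
  also have "\<dots> = (\<Sum>l<L. if l \<in> {..<k} then (?H l *\<^sub>v vec_block m w l) $ c else 0)"
  proof (rule sum.cong[OF refl])
    fix l assume "l \<in> {..<L}"
    have CAB: "C * A ^\<^sub>m (k - Suc l) * B \<in> carrier_mat r m" by simp
    show "(\<Sum>d<m. H\<^sub>L $$ (k * r + c, l * m + d) * w $ (l * m + d))
      = (if l \<in> {..<k} then (?H l *\<^sub>v vec_block m w l) $ c else 0)"
      using k c \<open>l \<in> {..<L}\<close>
      by (simp add: toeplitz_mat_index index_mult_mat_vec_sum[OF CAB]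
          del: index_mult_mat_vec index_mult_mat)
  qed
  also have "\<dots> = (\<Sum>l\<in>{..<L} \<inter> {..<k}. (?H l *\<^sub>v vec_block m w l) $ c)"
    by (rule sum.inter_restrict[symmetric]) simp
  also have "{..<L} \<inter> {..<k} = {..<k}" using k by auto
  finally show ?thesis .
qed

lemma obs_toeplitz_mult_vec_index:
  assumes k: "k < L" and c: "c < r" and x: "x \<in> carrier_vec n" and w: "w \<in> carrier_vec (L * m)"
  shows "(O\<^sub>L *\<^sub>v x + H\<^sub>L *\<^sub>v w) $ (k * r + c) = (C *\<^sub>v state A B x (vec_block m w) k) $ c"
  using add_mult_less_mult[OF k c] c obs_mat_carrier toeplitz_mat_carrier
  by (simp add: obs_mat_mult_vec_index[OF k c x] toeplitz_mat_mult_vec_index[OF k c w]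
      output_closed_form[OF x])

end

section \<open>The input-output history\<close>

locale lti_history = lti_system +
  assumes rank_obs_mat: "mat_rank (obs_mat L A C) = n" and L_pos: "0 < L"
begin

abbreviation "\<Gamma> \<equiv> Gamma_mat L A B C"
abbreviation "\<Theta> \<equiv> Theta_mat L A B C"
abbreviation "\<Pi>\<^sub>L \<equiv> Pi_mat L m r"

lemma obs_mat_kernel: "\<forall>x \<in> carrier_vec n. O\<^sub>L *\<^sub>v x = 0\<^sub>v (L * r) \<longrightarrow> x = 0\<^sub>v n"
  using rank_obs_mat mat_rank_eq_dim_col_iff[OF obs_mat_carrier] by blast

lemma pinv_obs_mat: "pinv O\<^sub>L \<in> carrier_mat n (L * r)" "pinv O\<^sub>L * O\<^sub>L = 1\<^sub>m n"
  using pinv_left_inverse[OF obs_mat_carrier obs_mat_kernel] by auto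

lemma state_dim_le_window_outputs: "n \<le> L * r"
  using mat_rank_le_dim_row[OF obs_mat_carrier] rank_obs_mat by simp

lemma Gamma_carrier: "\<Gamma> \<in> carrier_mat n (L * (m + r))"
  using pinv_obs_mat(1) unfolding Gamma_mat_def hcat_def carrier_mat_def
  by (simp add: reach_mat_def distrib_left)

(* The IOH with input window w when x is the state at the start of the window. *)
definition hist :: "real vec \<Rightarrow> real vec \<Rightarrow> real vec" where
  "hist x w = w @\<^sub>v (O\<^sub>L *\<^sub>v x + H\<^sub>L *\<^sub>v w)"

lemma hist_carrier: "w \<in> carrier_vec (L * m) \<Longrightarrow> hist x w \<in> carrier_vec (L * (m + r))"
  using toeplitz_mat_carrier by (intro carrier_vecI) (auto simp: hist_def distrib_left)

lemma Gamma_mult_hist: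
  assumes x: "x \<in> carrier_vec n" and w: "w \<in> carrier_vec (L * m)"
  shows "\<Gamma> *\<^sub>v hist x w = state A B x (vec_block m w) L"
proof -
  let ?P = "A ^\<^sub>m L * pinv O\<^sub>L"
  have P: "?P \<in> carrier_mat n (L * r)"
    using mult_carrier_mat[OF power_products_carrier(1) pinv_obs_mat(1)] .
  have R: "reach_mat L A B \<in> carrier_mat n (L * m)" by (simp add: reach_mat_def)
  have PH: "?P * H\<^sub>L \<in> carrier_mat n (L * m)" using mult_carrier_mat[OF P toeplitz_mat_carrier] .
  have Ox: "O\<^sub>L *\<^sub>v x \<in> carrier_vec (L * r)" using mult_mat_vec_carrier[OF obs_mat_carrier x] .
  have Hw: "H\<^sub>L *\<^sub>v w \<in> carrier_vec (L * r)" using mult_mat_vec_carrier[OF toeplitz_mat_carrier w] .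
  have "\<Gamma> *\<^sub>v hist x w = (reach_mat L A B - ?P * H\<^sub>L) *\<^sub>v w + ?P *\<^sub>v (O\<^sub>L *\<^sub>v x + H\<^sub>L *\<^sub>v w)"
    unfolding Gamma_mat_def hist_def
    by (rule hcat_mult_append_vec[OF minus_carrier_mat[OF PH] P w add_carrier_vec[OF Ox Hw]])
  also have "(reach_mat L A B - ?P * H\<^sub>L) *\<^sub>v w = reach_mat L A B *\<^sub>v w - ?P *\<^sub>v (H\<^sub>L *\<^sub>v w)"
    using minus_mult_distrib_mat_vec[OF R PH w] assoc_mult_mat_vec[OF P toeplitz_mat_carrier w] by simp
  also have "?P *\<^sub>v (O\<^sub>L *\<^sub>v x + H\<^sub>L *\<^sub>v w) = ?P *\<^sub>v (O\<^sub>L *\<^sub>v x) + ?P *\<^sub>v (H\<^sub>L *\<^sub>v w)"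
    using P Ox Hw by (rule mult_add_distrib_mat_vec)
  also have "?P *\<^sub>v (O\<^sub>L *\<^sub>v x) = A ^\<^sub>m L *\<^sub>v x"
    using assoc_mult_mat_vec[OF P obs_mat_carrier x] pinv_obs_mat
      assoc_mult_mat[OF power_products_carrier(1) pinv_obs_mat(1) obs_mat_carrier] x by simp
  also have "reach_mat L A B *\<^sub>v w - ?P *\<^sub>v (H\<^sub>L *\<^sub>v w) + (A ^\<^sub>m L *\<^sub>v x + ?P *\<^sub>v (H\<^sub>L *\<^sub>v w))
      = A ^\<^sub>m L *\<^sub>v x + reach_mat L A B *\<^sub>v w"
  proof -
    have "a - b + (c + b) = c + a" if "a \<in> carrier_vec n" "b \<in> carrier_vec n" "c \<in> carrier_vec n"
      for a b c :: "real vec"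
      using that by (intro eq_vecI) auto
    then show ?thesis using mult_mat_vec_carrier[OF R w] mult_mat_vec_carrier[OF P Hw]
      mult_mat_vec_carrier[OF power_products_carrier(1) x] by blast
  qed
  also have "\<dots> = state A B x (vec_block m w) L" using state_eq_reach_mat[OF A B x w] by simp
  finally show ?thesis .
qed

definition window :: "(nat \<Rightarrow> real vec) \<Rightarrow> nat \<Rightarrow> real vec" where
  "window u t = vec (L * m) (\<lambda>i. u (t - L + i div m) $ (i mod m))"

lemma window_carrier: "window u t \<in> carrier_vec (L * m)"
  by (simp add: window_def)

lemma vec_block_window:
  assumes "l < L" "u (t - L + l) \<in> carrier_vec m"
  shows "vec_block m (window u t) l = u (t - L + l)"
  using assms add_mult_less_mult[OF assms(1)] by (intro eq_vecI) (auto simp: window_def)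

lemma ioh_eq_hist:
  assumes x0: "x0 \<in> carrier_vec n" and u: "\<And>t. u t \<in> carrier_vec m" and t: "L \<le> t"
  shows "ioh L m r u (\<lambda>t. C *\<^sub>v state A B x0 u t) t = hist (state A B x0 u (t - L)) (window u t)"
proof (rule eq_vecI)
  let ?x = "state A B x0 u (t - L)"
  have x: "?x \<in> carrier_vec n" using state_carrier[OF A B x0] .
  have dims: "dim_vec (window u t) = L * m" by (simp add: window_def)
  fix i assume "i < dim_vec (hist ?x (window u t))"
  then have i: "i < L * m + L * r" by (simp add: hist_def dims)
  show "ioh L m r u (\<lambda>t. C *\<^sub>v state A B x0 u t) t $ i = hist ?x (window u t) $ i"
  proof (cases "i < L * m")
    case True
    then show ?thesis using i by (simp add: ioh_def hist_def dims window_def distrib_left)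
  next
    case False
    define j where "j = i - L * m"
    have j: "j < L * r" using i False by (simp add: j_def)
    define k c where "k = j div r" and "c = j mod r"
    note kc = block_index_decomp[OF j, folded k_def c_def]
    have "ioh L m r u (\<lambda>t. C *\<^sub>v state A B x0 u t) t $ i = (C *\<^sub>v state A B x0 u (t - L + k)) $ c"
      using i False by (simp add: ioh_def distrib_left k_def c_def j_def)
    also have "state A B x0 u (t - L + k) = state A B ?x (vec_block m (window u t)) k"
      unfolding state_add using kc(1) u by (intro state_cong) (simp add: vec_block_window)
    also have "(C *\<^sub>v \<dots>) $ c = (O\<^sub>L *\<^sub>v ?x + H\<^sub>L *\<^sub>v window u t) $ j"
      using obs_toeplitz_mult_vec_index[OF kc(1,2) x window_carrier] kc(3) by simp
    also have "\<dots> = hist ?x (window u t) $ i"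
      using i False by (simp add: hist_def dims j_def)
    finally show ?thesis .
  qed
qed (simp add: ioh_def hist_def window_def distrib_left)

definition window_push :: "real vec \<Rightarrow> real vec \<Rightarrow> real vec" where
  "window_push w a = vec_last w ((L - 1) * m) @\<^sub>v a"

lemma window_push_carrier: "a \<in> carrier_vec m \<Longrightarrow> window_push w a \<in> carrier_vec (L * m)"
  using mult_eq_pred_mult_add[OF L_pos, of m] by (auto simp: window_push_def)

lemma window_Suc:
  assumes u: "\<And>t. u t \<in> carrier_vec m" and t: "L \<le> t"
  shows "window u (Suc t) = window_push (window u t) (u t)"
proof (rule eq_vecI)
  note Lm = mult_eq_pred_mult_add[OF L_pos, of m]
  fix i assume "i < dim_vec (window_push (window u t) (u t))"
  then have i: "i < L * m" using u[of t] Lm by (simp add: window_push_def)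
  then have m: "0 < m" by (cases m) auto
  show "window u (Suc t) $ i = window_push (window u t) (u t) $ i"
  proof (cases "i < (L - 1) * m")
    case True
    have "window_push (window u t) (u t) $ i = window u t $ (m + i)"
      using True i u[of t] Lm by (simp add: window_push_def vec_last_def window_def)
    also have "\<dots> = u (t - L + Suc (i div m)) $ (i mod m)"
      using True Lm m by (simp add: window_def)
    finally show ?thesis using i t by (simp add: window_def Suc_diff_le)
  next
    case False
    define d where "d = i - (L - 1) * m"
    have d: "d < m" "i = (L - 1) * m + d" using False i Lm by (auto simp: d_def)
    then have "i div m = L - 1" "i mod m = d" by simp_all
    moreover have "Suc t - L + (L - 1) = t" using t L_pos by simp
    ultimately have "window u (Suc t) $ i = u t $ d" using i by (simp add: window_def)
    moreover have "window_push (window u t) (u t) $ i = u t $ d"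
      using False i u[of t] Lm by (simp add: window_push_def d_def)
    ultimately show ?thesis by simp
  qed
qed (use u[of t] in \<open>simp add: window_def window_push_def mult_eq_pred_mult_add[OF L_pos]\<close>)

lemma vec_block_window_push:
  assumes "Suc l < L" "w \<in> carrier_vec (L * m)" "a \<in> carrier_vec m"
  shows "vec_block m (window_push w a) l = vec_block m w (Suc l)"
proof (rule eq_vecI)
  fix d assume "d < dim_vec (vec_block m w (Suc l))"
  then have d: "d < m" by simp
  have "l * m + d < (L - 1) * m" using add_mult_less_mult[of l "L - 1" d m] assms(1) d by simp
  moreover have "L * m - (L - 1) * m + (l * m + d) = Suc l * m + d"
    using mult_eq_pred_mult_add[OF L_pos, of m] by simp
  ultimately show "vec_block m (window_push w a) l $ d = vec_block m w (Suc l) $ d"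
    using assms d mult_eq_pred_mult_add[OF L_pos, of m] by (simp add: window_push_def vec_last_def add.assoc)
qed simp

lemma obs_toeplitz_window_push:
  assumes x: "x \<in> carrier_vec n" and w: "w \<in> carrier_vec (L * m)" and a: "a \<in> carrier_vec m"
  shows "O\<^sub>L *\<^sub>v (A *\<^sub>v x + B *\<^sub>v vec_block m w 0) + H\<^sub>L *\<^sub>v window_push w a
    = vec_last (O\<^sub>L *\<^sub>v x + H\<^sub>L *\<^sub>v w) ((L - 1) * r) @\<^sub>v (C *\<^sub>v state A B x (vec_block m w) L)"
    (is "?lhs = ?rhs")
proof (rule eq_vecI)
  note Lr = mult_eq_pred_mult_add[OF L_pos, of r]
  let ?x' = "A *\<^sub>v x + B *\<^sub>v vec_block m w 0" and ?y = "\<lambda>k. C *\<^sub>v state A B x (vec_block m w) k"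
  have x': "?x' \<in> carrier_vec n" using A B by (auto intro!: carrier_vecI)
  fix j assume "j < dim_vec ?rhs"
  then have j: "j < L * r" using Lr by simp
  define k c where "k = j div r" and "c = j mod r"
  note kc = block_index_decomp[OF j, folded k_def c_def]
  have "?lhs $ j = (C *\<^sub>v state A B ?x' (vec_block m (window_push w a)) k) $ c"
    using obs_toeplitz_mult_vec_index[OF kc(1,2) x' window_push_carrier[OF a]] kc(3) by simp
  also have "state A B ?x' (vec_block m (window_push w a)) k = state A B ?x' (\<lambda>l. vec_block m w (Suc l)) k"
    using kc(1) w a by (intro state_cong) (simp add: vec_block_window_push)
  also have "\<dots> = state A B x (vec_block m w) (Suc k)"
    by (rule state_Suc_shift[symmetric])
  also have "(?y (Suc k)) $ c = ?rhs $ j"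
  proof (cases "Suc k < L")
    case True
    then have "Suc k * r + c < L * r" by (rule add_mult_less_mult[OF _ kc(2)])
    then have jr: "j < (L - 1) * r" using kc(3) Lr by simp
    have "L * r - (L - 1) * r + j = Suc k * r + c" using Lr kc(3) by simp
    then have "?rhs $ j = (O\<^sub>L *\<^sub>v x + H\<^sub>L *\<^sub>v w) $ (Suc k * r + c)"
      using jr j Lr by (simp add: vec_last_def add.assoc del: index_mult_mat_vec)
    then show ?thesis using obs_toeplitz_mult_vec_index[OF True kc(2) x w] by simp
  next
    case False
    then have "Suc k = L" "k = L - 1" using kc(1) by auto
    then have "j = (L - 1) * r + c" using kc(3) by simp
    then show ?thesis using \<open>Suc k = L\<close> j Lr kc(2) by (simp del: index_mult_mat_vec)
  qed
  finally show "?lhs $ j = ?rhs $ j" .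
qed (use mult_eq_pred_mult_add[OF L_pos, of r] in simp)

lemma Theta_mult_hist_blocks:
  assumes x: "x \<in> carrier_vec n" and w: "w \<in> carrier_vec (L * m)"
  shows "\<Theta> *\<^sub>v hist x w = (shift_mat L m *\<^sub>v w @\<^sub>v shift_mat L r *\<^sub>v (O\<^sub>L *\<^sub>v x + H\<^sub>L *\<^sub>v w))
    + E_mat L m r *\<^sub>v (C *\<^sub>v state A B x (vec_block m w) L)"
proof -
  let ?D = "four_block_mat (shift_mat L m) (0\<^sub>m (L * m) (L * r)) (0\<^sub>m (L * r) (L * m)) (shift_mat L r)"
  let ?E = "E_mat L m r"
  have y: "O\<^sub>L *\<^sub>v x + H\<^sub>L *\<^sub>v w \<in> carrier_vec (L * r)"
    using mult_mat_vec_carrier[OF toeplitz_mat_carrier w] by (intro carrier_vecI) simp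
  have h: "hist x w \<in> carrier_vec (L * m + L * r)" using hist_carrier[OF w] by (simp add: distrib_left)
  have Sm: "shift_mat L m \<in> carrier_mat (L * m) (L * m)" and Sr: "shift_mat L r \<in> carrier_mat (L * r) (L * r)"
    by (simp_all add: shift_mat_def)
  have D: "?D \<in> carrier_mat (L * m + L * r) (L * m + L * r)" using four_block_carrier_mat[OF Sm Sr] .
  have E: "?E \<in> carrier_mat (L * m + L * r) r" by (simp add: E_mat_def distrib_left)
  have G: "\<Gamma> \<in> carrier_mat n (L * m + L * r)" using Gamma_carrier by (simp add: distrib_left)
  have "\<Theta> *\<^sub>v hist x w = ?D *\<^sub>v hist x w + ((?E * C) * \<Gamma>) *\<^sub>v hist x w"
    unfolding Theta_mat_def dim_system_mats
    by (rule add_mult_distrib_mat_vec[OF D mult_carrier_mat[OF mult_carrier_mat[OF E C] G] h])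
  also have "?D *\<^sub>v hist x w = (shift_mat L m *\<^sub>v w) @\<^sub>v (shift_mat L r *\<^sub>v (O\<^sub>L *\<^sub>v x + H\<^sub>L *\<^sub>v w))"
    unfolding hist_def by (rule mult_mat_vec_split[OF Sm Sr w y])
  also have "((?E * C) * \<Gamma>) *\<^sub>v hist x w = ?E *\<^sub>v (C *\<^sub>v state A B x (vec_block m w) L)"
    using assoc_mult_mat_vec[OF mult_carrier_mat[OF E C] G h] assoc_mult_mat_vec[OF E C]
      Gamma_mult_hist[OF x w] mult_mat_vec_carrier[OF G h] by simp
  finally show ?thesis .
qed

lemma Theta_mult_hist:
  assumes x: "x \<in> carrier_vec n" and w: "w \<in> carrier_vec (L * m)" and a: "a \<in> carrier_vec m"
  shows "\<Theta> *\<^sub>v hist x w + \<Pi>\<^sub>L *\<^sub>v a = hist (A *\<^sub>v x + B *\<^sub>v vec_block m w 0) (window_push w a)"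
proof -
  let ?y = "O\<^sub>L *\<^sub>v x + H\<^sub>L *\<^sub>v w" and ?g = "C *\<^sub>v state A B x (vec_block m w) L"
  have y: "?y \<in> carrier_vec (L * r)"
    using mult_mat_vec_carrier[OF toeplitz_mat_carrier w] by (intro carrier_vecI) simp
  have g: "?g \<in> carrier_vec r" using mult_mat_vec_carrier[OF C state_carrier[OF A B x]] .
  have Sw: "shift_mat L m *\<^sub>v w \<in> carrier_vec (L * m)" and Sy: "shift_mat L r *\<^sub>v ?y \<in> carrier_vec (L * r)"
    using y by (auto simp: shift_mat_def intro!: carrier_vecI)
  have a': "0\<^sub>v ((L - 1) * m) @\<^sub>v a \<in> carrier_vec (L * m)" and g': "0\<^sub>v ((L - 1) * r) @\<^sub>v ?g \<in> carrier_vec (L * r)"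
    using a g mult_eq_pred_mult_add[OF L_pos] by (auto intro!: carrier_vecI)
  have "\<Theta> *\<^sub>v hist x w + \<Pi>\<^sub>L *\<^sub>v a = ((shift_mat L m *\<^sub>v w) @\<^sub>v (shift_mat L r *\<^sub>v ?y))
      + (0\<^sub>v (L * m) @\<^sub>v 0\<^sub>v ((L - 1) * r) @\<^sub>v ?g) + ((0\<^sub>v ((L - 1) * m) @\<^sub>v a) @\<^sub>v 0\<^sub>v (L * r))"
    by (simp add: Theta_mult_hist_blocks[OF x w] E_mat_mult_vec[OF g L_pos] Pi_mat_mult_vec[OF a L_pos])
  also have "\<dots> = (shift_mat L m *\<^sub>v w + (0\<^sub>v ((L - 1) * m) @\<^sub>v a))
      @\<^sub>v (shift_mat L r *\<^sub>v ?y + (0\<^sub>v ((L - 1) * r) @\<^sub>v ?g))"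
    using append_vec_add[OF Sw zero_carrier_vec Sy g'] append_vec_add[OF Sw a' add_carrier_vec[OF Sy g'] zero_carrier_vec]
      Sw Sy g' by simp
  also have "\<dots> = window_push w a @\<^sub>v (vec_last ?y ((L - 1) * r) @\<^sub>v ?g)"
    unfolding shift_mat_mult_vec_add[OF w a L_pos] shift_mat_mult_vec_add[OF y g L_pos] window_push_def ..
  also have "\<dots> = hist (A *\<^sub>v x + B *\<^sub>v vec_block m w 0) (window_push w a)"
    unfolding hist_def obs_toeplitz_window_push[OF x w a] ..
  finally show ?thesis .
qed

theorem ioh_recursion:
  assumes x0: "x0 \<in> carrier_vec n" and u: "\<And>t. u t \<in> carrier_vec m" and t: "L \<le> t"
  defines "y \<equiv> \<lambda>t. C *\<^sub>v state A B x0 u t"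
  defines "v \<equiv> ioh L m r u y"
  shows "v (Suc t) = \<Theta> *\<^sub>v v t + \<Pi>\<^sub>L *\<^sub>v u t" and "y t = (C * \<Gamma>) *\<^sub>v v t"
proof -
  let ?x = "state A B x0 u (t - L)"
  have x: "?x \<in> carrier_vec n" using state_carrier[OF A B x0] .
  have vt: "v t = hist ?x (window u t)" unfolding v_def y_def using ioh_eq_hist[OF x0 u t] .
  have window: "state A B ?x (vec_block m (window u t)) k = state A B x0 u (t - L + k)" if "k \<le> L" for k
    unfolding state_add using that u by (intro state_cong) (simp add: vec_block_window)
  have "v (Suc t) = hist (state A B x0 u (Suc t - L)) (window u (Suc t))"
    unfolding v_def y_def using ioh_eq_hist[OF x0 u] t by simp
  also have "state A B x0 u (Suc t - L) = A *\<^sub>v ?x + B *\<^sub>v vec_block m (window u t) 0"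
    using window[of 1] L_pos t by (simp add: Suc_diff_le)
  also have "window u (Suc t) = window_push (window u t) (u t)" by (rule window_Suc[OF u t])
  finally show "v (Suc t) = \<Theta> *\<^sub>v v t + \<Pi>\<^sub>L *\<^sub>v u t"
    unfolding vt by (simp add: Theta_mult_hist[OF x window_carrier u])
  have "(C * \<Gamma>) *\<^sub>v v t = C *\<^sub>v (\<Gamma> *\<^sub>v hist ?x (window u t))"
    unfolding vt using assoc_mult_mat_vec[OF C Gamma_carrier hist_carrier[OF window_carrier]] .
  also have "\<dots> = y t"
    unfolding Gamma_mult_hist[OF x window_carrier] window[OF order_refl] y_def using t by simp
  finally show "y t = (C * \<Gamma>) *\<^sub>v v t" ..
qed


section \<open>The subspace spanned by P\<close>

abbreviation "\<P> \<equiv> P_mat L A B C"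

definition hist_mat :: "real mat" where
  "hist_mat = four_block_mat (1\<^sub>m (L * m)) (0\<^sub>m (L * m) n) H\<^sub>L O\<^sub>L"

lemma hist_mat_carrier: "hist_mat \<in> carrier_mat (L * (m + r)) (L * m + n)"
  unfolding hist_mat_def distrib_left
  using four_block_carrier_mat[OF one_carrier_mat[of "L * m"] obs_mat_carrier] by simp

lemma hist_mat_mult_vec:
  assumes w: "w \<in> carrier_vec (L * m)" and x: "x \<in> carrier_vec n"
  shows "hist_mat *\<^sub>v (w @\<^sub>v x) = hist x w"
proof -
  have "hist_mat *\<^sub>v (w @\<^sub>v x) = (1\<^sub>m (L * m) *\<^sub>v w + 0\<^sub>m (L * m) n *\<^sub>v x) @\<^sub>v (H\<^sub>L *\<^sub>v w + O\<^sub>L *\<^sub>v x)"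
    unfolding hist_mat_def
    by (rule four_block_mat_mult_vec[OF one_carrier_mat zero_carrier_mat toeplitz_mat_carrier obs_mat_carrier w x])
  also have "\<dots> = hist x w"
    unfolding hist_def using w x mult_mat_vec_carrier[OF obs_mat_carrier x]
      mult_mat_vec_carrier[OF toeplitz_mat_carrier w] by (simp add: comm_add_vec)
  finally show ?thesis .
qed

lemma mat_image_hist_mat:
  "mat_image hist_mat = {hist x w | x w. x \<in> carrier_vec n \<and> w \<in> carrier_vec (L * m)}"
proof (intro equalityI subsetI)
  fix v assume "v \<in> mat_image hist_mat"
  then obtain z where v: "v = hist_mat *\<^sub>v z" and z: "z \<in> carrier_vec (L * m + n)"
    using hist_mat_carrier unfolding mat_image_def by auto
  then have "v = hist (vec_last z n) (vec_first z (L * m))"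
    using hist_mat_mult_vec[of "vec_first z (L * m)" "vec_last z n"] by simp
  then show "v \<in> {hist x w | x w. x \<in> carrier_vec n \<and> w \<in> carrier_vec (L * m)}"
    using vec_last_carrier vec_first_carrier by blast
next
  fix v assume "v \<in> {hist x w | x w. x \<in> carrier_vec n \<and> w \<in> carrier_vec (L * m)}"
  then obtain x w where "v = hist x w" "x \<in> carrier_vec n" "w \<in> carrier_vec (L * m)" by blast
  then show "v \<in> mat_image hist_mat"
    using mat_image_mult_vec[of "w @\<^sub>v x" hist_mat] hist_mat_carrier hist_mat_mult_vec by auto
qed

lemma mat_rank_hist_mat: "mat_rank hist_mat = L * m + n"
  unfolding mat_rank_eq_dim_col_iff[OF hist_mat_carrier]
proof (intro ballI impI)
  fix z :: "real vec" assume z: "z \<in> carrier_vec (L * m + n)" and 0: "hist_mat *\<^sub>v z = 0\<^sub>v (L * (m + r))"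
  define w x where "w = vec_first z (L * m)" and "x = vec_last z n"
  have zwx: "z = w @\<^sub>v x" using z by (simp add: w_def x_def)
  have "w @\<^sub>v (O\<^sub>L *\<^sub>v x + H\<^sub>L *\<^sub>v w) = 0\<^sub>v (L * m + L * r)"
    using 0 hist_mat_mult_vec[of w x] unfolding zwx hist_def by (simp add: w_def x_def distrib_left)
  also have "\<dots> = 0\<^sub>v (L * m) @\<^sub>v 0\<^sub>v (L * r)" by (intro eq_vecI) auto
  finally have "w @\<^sub>v (O\<^sub>L *\<^sub>v x + H\<^sub>L *\<^sub>v w) = 0\<^sub>v (L * m) @\<^sub>v 0\<^sub>v (L * r)" .
  then have w0: "w = 0\<^sub>v (L * m)" and "O\<^sub>L *\<^sub>v x + H\<^sub>L *\<^sub>v w = 0\<^sub>v (L * r)"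
    using append_vec_eq[of w "L * m"] by (auto simp: w_def)
  then have "O\<^sub>L *\<^sub>v x = 0\<^sub>v (L * r)"
    using mult_mat_vec_carrier[OF obs_mat_carrier, of x] toeplitz_mat_carrier by (simp add: x_def)
  then have "x = 0\<^sub>v n" using obs_mat_kernel by (simp add: x_def)
  then show "z = 0\<^sub>v (L * m + n)" using zwx w0 by (intro eq_vecI) auto
qed

lemma Theta_carrier: "\<Theta> \<in> carrier_mat (L * (m + r)) (L * (m + r))"
proof -
  have "E_mat L m r * C * \<Gamma> \<in> carrier_mat (L * (m + r)) (L * (m + r))"
    using mult_carrier_mat[OF mult_carrier_mat[OF _ C] Gamma_carrier] by (simp add: E_mat_def)
  then show ?thesis unfolding Theta_mat_def
    by (simp add: distrib_left shift_mat_def)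
qed

lemma Pi_carrier: "\<Pi>\<^sub>L \<in> carrier_mat (L * (m + r)) m"
  by (simp add: Pi_mat_def)

lemma P_mat_eq_block_row:
  "\<P> = block_row (L * (m + r)) m (L * (m + r)) (\<lambda>k. \<Theta> ^\<^sub>m (L * (m + r) - 1 - k) * \<Pi>\<^sub>L)"
  by (simp add: P_mat_def block_row_def Let_def)

lemma hist_mem_mat_image_hist_mat:
  "x \<in> carrier_vec n \<Longrightarrow> w \<in> carrier_vec (L * m) \<Longrightarrow> hist x w \<in> mat_image hist_mat"
  unfolding mat_image_hist_mat by blast

lemma Theta_mult_mem_mat_image_hist_mat:
  assumes "v \<in> mat_image hist_mat"
  shows "\<Theta> *\<^sub>v v \<in> mat_image hist_mat"
proof -
  obtain x w where v: "v = hist x w" and x: "x \<in> carrier_vec n" and w: "w \<in> carrier_vec (L * m)"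
    using assms unfolding mat_image_hist_mat by blast
  have "\<Theta> *\<^sub>v v = \<Theta> *\<^sub>v hist x w + \<Pi>\<^sub>L *\<^sub>v 0\<^sub>v m"
    using mult_mat_vec_carrier[OF Theta_carrier hist_carrier[OF w]] Pi_carrier v by simp
  also have "\<dots> = hist (A *\<^sub>v x + B *\<^sub>v vec_block m w 0) (window_push w (0\<^sub>v m))"
    by (rule Theta_mult_hist[OF x w zero_carrier_vec])
  finally show ?thesis using A B x window_push_carrier[OF zero_carrier_vec]
    by (auto intro!: hist_mem_mat_image_hist_mat carrier_vecI)
qed

lemma Pi_mult_mem_mat_image_hist_mat:
  assumes a: "a \<in> carrier_vec m"
  shows "\<Pi>\<^sub>L *\<^sub>v a \<in> mat_image hist_mat"
proof -
  have "hist (0\<^sub>v n) (0\<^sub>v (L * m)) = 0\<^sub>v (L * (m + r))"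
    using obs_mat_carrier toeplitz_mat_carrier by (intro eq_vecI) (auto simp: hist_def distrib_left)
  then have "\<Pi>\<^sub>L *\<^sub>v a = \<Theta> *\<^sub>v hist (0\<^sub>v n) (0\<^sub>v (L * m)) + \<Pi>\<^sub>L *\<^sub>v a"
    using Theta_carrier mult_mat_vec_carrier[OF Pi_carrier a] by simp
  also have "\<dots> = hist (A *\<^sub>v 0\<^sub>v n + B *\<^sub>v vec_block m (0\<^sub>v (L * m)) 0) (window_push (0\<^sub>v (L * m)) a)"
    by (rule Theta_mult_hist[OF zero_carrier_vec zero_carrier_vec a])
  finally show ?thesis using A B window_push_carrier[OF a]
    by (auto intro!: hist_mem_mat_image_hist_mat carrier_vecI)
qed

lemma Theta_pow_mult_mem_mat_image_hist_mat:
  assumes "v \<in> mat_image hist_mat"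
  shows "\<Theta> ^\<^sub>m q *\<^sub>v v \<in> mat_image hist_mat"
  using assms
proof (induction q arbitrary: v)
  case 0
  then have "v \<in> carrier_vec (L * (m + r))" using hist_mat_carrier by (auto simp: mat_image_def)
  then show ?case using 0 Theta_carrier by simp
next
  case (Suc q)
  have "v \<in> carrier_vec (L * (m + r))" using Suc.prems hist_mat_carrier by (auto simp: mat_image_def)
  then have "\<Theta> ^\<^sub>m Suc q *\<^sub>v v = \<Theta> ^\<^sub>m q *\<^sub>v (\<Theta> *\<^sub>v v)"
    using assoc_mult_mat_vec[OF pow_carrier_mat[OF Theta_carrier] Theta_carrier] by simp
  then show ?case using Suc.IH[OF Theta_mult_mem_mat_image_hist_mat[OF Suc.prems]] by simp
qed

lemma mat_image_P_subset: "mat_image \<P> \<subseteq> mat_image hist_mat"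
proof
  let ?N = "L * (m + r)"
  have ThPi: "\<Theta> ^\<^sub>m q * \<Pi>\<^sub>L \<in> carrier_mat ?N m" for q
    using mult_carrier_mat[OF pow_carrier_mat[OF Theta_carrier] Pi_carrier] .
  have mem: "(\<Theta> ^\<^sub>m q * \<Pi>\<^sub>L) *\<^sub>v a \<in> mat_image hist_mat" if a: "a \<in> carrier_vec m" for q a
    using Theta_pow_mult_mem_mat_image_hist_mat[OF Pi_mult_mem_mat_image_hist_mat[OF a]]
      assoc_mult_mat_vec[OF pow_carrier_mat[OF Theta_carrier] Pi_carrier a] by simp
  fix v assume "v \<in> mat_image \<P>"
  then obtain z where v: "v = \<P> *\<^sub>v z" and z: "z \<in> carrier_vec (?N * m)"
    unfolding mat_image_def P_mat_eq_block_row by auto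
  have "v = sum_vec ?N (\<lambda>k. (\<Theta> ^\<^sub>m (?N - 1 - k) * \<Pi>\<^sub>L) *\<^sub>v vec_block m z k) ?N"
    unfolding v P_mat_eq_block_row using ThPi z by (intro block_row_mult_vec)
  also have "\<dots> \<in> mat_image hist_mat"
    using hist_mat_carrier mem mult_mat_vec_carrier[OF ThPi vec_block_carrier]
    by (intro sum_vec_mem zero_mem_mat_image add_mem_mat_image) auto
  finally show "v \<in> mat_image hist_mat" .
qed

lemma ioh_from_rest_mem_mat_image_P:
  assumes u: "\<And>t. u t \<in> carrier_vec m" and rest: "\<And>t. t < L \<Longrightarrow> u t = 0\<^sub>v m"
    and J: "J \<le> L * (m + r)"
  shows "ioh L m r u (\<lambda>t. C *\<^sub>v state A B (0\<^sub>v n) u t) (L + J) \<in> mat_image \<P>"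
proof -
  let ?N = "L * (m + r)" and ?v = "ioh L m r u (\<lambda>t. C *\<^sub>v state A B (0\<^sub>v n) u t)"
  have ThPi: "\<Theta> ^\<^sub>m q * \<Pi>\<^sub>L \<in> carrier_mat ?N m" for q
    using mult_carrier_mat[OF pow_carrier_mat[OF Theta_carrier] Pi_carrier] .
  have P: "\<P> \<in> carrier_mat ?N (?N * m)" unfolding P_mat_eq_block_row by simp
  have "window u L = 0\<^sub>v (L * m)"
    using rest block_index_decomp[of _ L m] by (intro eq_vecI) (auto simp: window_def)
  moreover have "state A B (0\<^sub>v n) u 0 = 0\<^sub>v n" by simp
  ultimately have "?v L = hist (0\<^sub>v n) (0\<^sub>v (L * m))"
    using ioh_eq_hist[OF zero_carrier_vec u, of L] by simp
  also have "\<dots> = 0\<^sub>v ?N"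
    using obs_mat_carrier toeplitz_mat_carrier by (intro eq_vecI) (auto simp: hist_def distrib_left)
  finally have v0: "?v L = 0\<^sub>v ?N" .
  have "?v (L + J) = state \<Theta> \<Pi>\<^sub>L (?v L) (\<lambda>l. u (L + l)) J"
    by (rule recurrence_eq_state) (rule ioh_recursion(1)[OF zero_carrier_vec u])
  also have "\<dots> = sum_vec ?N (\<lambda>l. (\<Theta> ^\<^sub>m (J - 1 - l) * \<Pi>\<^sub>L) *\<^sub>v u (L + l)) J"
    unfolding v0 using Theta_carrier Pi_carrier u
    by (simp add: state_closed_form mult_mat_vec_zero[OF pow_carrier_mat[OF Theta_carrier]])
  also have "\<dots> \<in> mat_image \<P>"
  proof (intro sum_vec_mem zero_mem_mat_image[OF P] add_mem_mat_image[OF P])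
    fix l assume l: "l < J"
    let ?k = "?N - 1 - (J - 1 - l)"
    have "?k < ?N" "?N - 1 - ?k = J - 1 - l" using l J by auto
    then show "(\<Theta> ^\<^sub>m (J - 1 - l) * \<Pi>\<^sub>L) *\<^sub>v u (L + l) \<in> mat_image \<P>"
      unfolding P_mat_eq_block_row using block_mult_vec_mem_mat_image[OF ThPi _ u] by metis
    show "(\<Theta> ^\<^sub>m (J - 1 - l) * \<Pi>\<^sub>L) *\<^sub>v u (L + l) \<in> carrier_vec ?N"
      using mult_mat_vec_carrier[OF ThPi u] .
  qed
  finally show ?thesis .
qed

definition steering_input :: "real vec \<Rightarrow> real vec \<Rightarrow> nat \<Rightarrow> real vec" where
  "steering_input z w t = (if t < L then 0\<^sub>v m
     else if t < L + n then vec_block m z (t - L) else vec_block m w (t - L - n))"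

lemma hist_mem_mat_image_P:
  assumes ctrb: "mat_rank (reach_mat n A B) = n" and N: "L + n \<le> L * (m + r)"
    and x: "x \<in> carrier_vec n" and w: "w \<in> carrier_vec (L * m)"
  shows "hist x w \<in> mat_image \<P>"
proof -
  have R: "reach_mat n A B \<in> carrier_mat n (n * m)" by (simp add: reach_mat_def)
  have "x \<in> mat_image (reach_mat n A B)" using x mat_image_eq_carrier_if_full_row_rank[OF R ctrb] by simp
  then obtain z where z: "z \<in> carrier_vec (n * m)" and zx: "reach_mat n A B *\<^sub>v z = x"
    using R unfolding mat_image_def by auto
  let ?u = "steering_input z w"
  have u: "?u t \<in> carrier_vec m" for t by (simp add: steering_input_def)
  have "state A B (0\<^sub>v n) ?u L = state A B (0\<^sub>v n) (\<lambda>_. 0\<^sub>v m) L"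
    by (rule state_cong) (simp add: steering_input_def)
  then have "state A B (0\<^sub>v n) ?u (L + n) = state A B (0\<^sub>v n) (\<lambda>l. ?u (L + l)) n"
    unfolding state_add state_zero[OF A B] by simp
  also have "\<dots> = state A B (0\<^sub>v n) (vec_block m z) n"
    by (intro state_cong) (simp add: steering_input_def)
  also have "\<dots> = x"
    using state_eq_reach_mat[OF A B zero_carrier_vec z] zx x
      mult_mat_vec_zero[OF power_products_carrier(1)] by simp
  finally have state: "state A B (0\<^sub>v n) ?u (L + (L + n) - L) = x" by simp
  have window: "window ?u (L + (L + n)) = w"
  proof (rule eq_vecI)
    fix i assume "i < dim_vec w"
    then have "i < L * m" using w by simp
    then show "window ?u (L + (L + n)) $ i = w $ i"
      using block_index_decomp[of i L m] by (simp add: window_def steering_input_def)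
  qed (use w in \<open>simp add: window_def\<close>)
  have "ioh L m r ?u (\<lambda>t. C *\<^sub>v state A B (0\<^sub>v n) ?u t) (L + (L + n)) \<in> mat_image \<P>"
    using N u by (intro ioh_from_rest_mem_mat_image_P) (auto simp: steering_input_def)
  then show ?thesis
    using ioh_eq_hist[OF zero_carrier_vec u, of "L + (L + n)"] state window by simp
qed


lemma mat_image_P_eq:
  assumes ctrb: "mat_rank (reach_mat n A B) = n"
  shows "mat_image \<P> = mat_image hist_mat"
proof
  show "mat_image \<P> \<subseteq> mat_image hist_mat" by (rule mat_image_P_subset)
  show "mat_image hist_mat \<subseteq> mat_image \<P>"
  proof (cases "L + n \<le> L * (m + r)")
    case True
    then show ?thesis using hist_mem_mat_image_P[OF ctrb True] unfolding mat_image_hist_mat by blast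
  next
    case False
    have "m = 0"
    proof (rule ccontr)
      assume "m \<noteq> 0"
      then have "L \<le> L * m" by simp
      moreover have "L * (m + r) = L * m + L * r" by (rule distrib_left)
      ultimately show False using False state_dim_le_window_outputs by linarith
    qed
    then have "n = 0"
      using mat_rank_le_dim_col[of "reach_mat n A B" n "n * m"] ctrb by (simp add: reach_mat_def)
    show ?thesis
    proof
      fix v assume "v \<in> mat_image hist_mat"
      then obtain z where v: "v = hist_mat *\<^sub>v z" and z: "z \<in> carrier_vec (L * m + n)"
        using hist_mat_carrier unfolding mat_image_def by auto
      have "z = 0\<^sub>v (L * m + n)" using z \<open>m = 0\<close> \<open>n = 0\<close> by (intro eq_vecI) auto
      then have "v = 0\<^sub>v (L * (m + r))" using v hist_mat_carrier by simp
      then show "v \<in> mat_image \<P>"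
        using zero_mem_mat_image[of \<P> _ "L * (m + r) * m"] by (simp add: P_mat_eq_block_row)
    qed
  qed
qed

lemma mat_rank_P:
  assumes ctrb: "mat_rank (reach_mat n A B) = n"
  shows "mat_rank \<P> = L * m + n"
proof -
  have "\<P> \<in> carrier_mat (L * (m + r)) (L * (m + r) * m)" unfolding P_mat_eq_block_row by simp
  then have "mat_rank \<P> = mat_rank hist_mat"
    using mat_rank_eq_if_mat_image_eq hist_mat_carrier mat_image_P_eq[OF ctrb] by blast
  then show ?thesis using mat_rank_hist_mat by simp
qed

end

context lti_system
begin

theorem ioh_properties:
  assumes rank_obs: "mat_rank O\<^sub>L = n" and ctrb: "mat_rank (reach_mat n A B) = n"
    and x0: "x0 \<in> carrier_vec n" and u: "\<And>t. u t \<in> carrier_vec m"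
  defines "y \<equiv> \<lambda>t. C *\<^sub>v state A B x0 u t"
  defines "v \<equiv> ioh L m r u y"
  shows "(\<forall>t\<ge>L. v (Suc t) = Theta_mat L A B C *\<^sub>v v t + Pi_mat L m r *\<^sub>v u t
              \<and> y t = (C * Gamma_mat L A B C) *\<^sub>v v t)
       \<and> (\<forall>t\<ge>L. v t \<in> mat_image (P_mat L A B C))
       \<and> mat_rank (P_mat L A B C) = L * m + n"
proof (cases "L = 0")
  case True
  have "n = 0" using mat_rank_le_dim_row[OF obs_mat_carrier] rank_obs True by simp
  have v: "dim_vec (v t) = 0" for t by (simp add: v_def ioh_def True)
  have P: "P_mat L A B C \<in> carrier_mat 0 0" by (simp add: P_mat_def True)
  have "y t = (C * Gamma_mat L A B C) *\<^sub>v v t" for t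
    using state_carrier[OF A B x0, of u t] \<open>n = 0\<close> v
    by (intro eq_vecI) (auto simp: y_def scalar_prod_def)
  moreover have "v (Suc t) = Theta_mat L A B C *\<^sub>v v t + Pi_mat L m r *\<^sub>v u t" for t
    using v by (intro eq_vecI) (simp_all add: Pi_mat_def True)
  moreover have "v t = P_mat L A B C *\<^sub>v 0\<^sub>v 0" for t using v P by (intro eq_vecI) auto
  then have "v t \<in> mat_image (P_mat L A B C)" for t using P mat_image_mult_vec[of "0\<^sub>v 0"] by simp
  moreover have "mat_rank (P_mat L A B C) = 0" using mat_rank_le_dim_row[OF P] by simp
  ultimately show ?thesis using True \<open>n = 0\<close> by simp
next
  case False
  interpret lti_history n m r L A B C using rank_obs False by unfold_locales auto
  have "v t \<in> mat_image \<P>" if "L \<le> t" for t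
    unfolding v_def y_def ioh_eq_hist[OF x0 u that] mat_image_P_eq[OF ctrb]
    using state_carrier[OF A B x0] window_carrier by (rule hist_mem_mat_image_hist_mat)
  then show ?thesis
    using ioh_recursion[OF x0 u] mat_rank_P[OF ctrb] unfolding v_def y_def by simp
qed

end

theorem lemma1:
  fixes n m r L :: nat and A B C :: "real mat"
    and x0 :: "real vec" and u :: "nat \<Rightarrow> real vec"
  assumes A: "A \<in> carrier_mat n n" and B: "B \<in> carrier_mat n m" and C: "C \<in> carrier_mat r n"
    and ctrb: "mat_rank (reach_mat n A B) = n"
    and obsv: "mat_rank (obs_mat n A C) = n"
    and schur: "schur_mat A"
    and rankL: "mat_rank (obs_mat L A C) = n"
    and x0: "x0 \<in> carrier_vec n"
    and u: "\<And>t. u t \<in> carrier_vec m"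
  defines "y \<equiv> \<lambda>t. C *\<^sub>v state A B x0 u t"
  defines "v \<equiv> ioh L m r u y"
  shows "(\<forall>t\<ge>L. v (Suc t) = Theta_mat L A B C *\<^sub>v v t + Pi_mat L m r *\<^sub>v u t
              \<and> y t = (C * Gamma_mat L A B C) *\<^sub>v v t)
       \<and> (\<forall>t\<ge>L. v t \<in> mat_image (P_mat L A B C))
       \<and> mat_rank (P_mat L A B C) = L * m + n"
proof -
  interpret lti_system n m r L A B C using A B C by unfold_locales
  show ?thesis unfolding y_def v_def using ioh_properties[OF rankL ctrb x0 u] .
qed

end
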